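(* Let $d,J\in\mathbb{N}^+$, let $E_1,\dots,E_J\subseteq\mathbb{R}^d$ be pairwise disjoint bounded closed sets, $E=\bigcup_{j=1}^J E_j$, and let $N\ge 36d(2d+1)$, $L\ge 12$ be integers. Then $\mathscr{C}_d(E_1,\dots,E_J)|_E\subseteq\mathscr{H}_d(N,L)|_E$.
   Context: For a set $\mathscr{F}$ of functions, $\mathscr{F}|_E=\{f|_E: f\in\mathscr{F}\}$ where $f|_E$ is the restriction to $E$. $\mathscr{C}_d(E_1,\dots,E_J)=\{\sum_{j=1}^J r_j\mathbb{1}_{E_j}: r_1,\dots,r_J\in\mathbb{Q}\}$ with $\mathbb{1}_E$ the indicator of $E$. Let $\sigma_1:\mathbb{R}\to\mathbb{R}$ be the continuous triangular-wave function of period $2$: $\sigma_1(x)=|x|$ for $x\in[-1,1]$, $\sigma_1(x+2)=\sigma_1(x)$. Let $\sigma_2(x)=x/(|x|+1)$. The activation function is $\sigma(x)=\sigma_1(x)$ for $x\ge0$ and $\sigma(x)=\sigma_2(x)$ for $x<0$, applied entrywise. $\mathscr{H}_d(N,L)$ is the set of all functions $\phi:\mathbb{R}^d\to\mathbb{R}$ of the form $\phi=\mathcal{L}_L\circ\sigma\circ\mathcal{L}_{L-1}\circ\cdots\circ\sigma\circ\mathcal{L}_0$, where $\mathcal{L}_0:\mathbb{R}^d\to\mathbb{R}^N$, $\mathcal{L}_i:\mathbb{R}^N\to\mathbb{R}^N$ ($1\le i\le L-1$), $\mathcal{L}_L:\mathbb{R}^N\to\mathbb{R}$ are arbitrary affine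 maps. *)

theory Defs
  imports "HOL-Analysis.Analysis" "HOL-Library.FuncSet"
begin

text \<open>Triangular wave of period 2: equals abs x on [-1,1].\<close>
definition sigma1 :: "real \<Rightarrow> real" where
  "sigma1 x = \<bar>x - 2 * of_int \<lfloor>(x + 1) / 2\<rfloor>\<bar>"

definition sigma2 :: "real \<Rightarrow> real" where
  "sigma2 x = x / (\<bar>x\<bar> + 1)"

definition act :: "real \<Rightarrow> real" where
  "act x = (if x \<ge> 0 then sigma1 x else sigma2 x)"

text \<open>Vectors in R^N (N a natural number) are represented as nat => real,
  with entries of index >= N equal to 0.\<close>
definition act_vec :: "nat \<Rightarrow> (nat \<Rightarrow> real) \<Rightarrow> (nat \<Rightarrow> real)" where
  "act_vec N h = (\<lambda>i. if i < N then act (h i) else 0)"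

definition affine_NN :: "nat \<Rightarrow> (nat \<Rightarrow> nat \<Rightarrow> real) \<Rightarrow> (nat \<Rightarrow> real) \<Rightarrow> (nat \<Rightarrow> real) \<Rightarrow> (nat \<Rightarrow> real)" where
  "affine_NN N W b h = (\<lambda>i. if i < N then (\<Sum>j<N. W i j * h j) + b i else 0)"

definition affine_in :: "nat \<Rightarrow> (nat \<Rightarrow> 'd::finite \<Rightarrow> real) \<Rightarrow> (nat \<Rightarrow> real) \<Rightarrow> real^'d \<Rightarrow> (nat \<Rightarrow> real)" where
  "affine_in N W b x = (\<lambda>i. if i < N then (\<Sum>j\<in>UNIV. W i j * x $ j) + b i else 0)"

text \<open>hidden k x = output of (k+1)-th activation layer:
  sigma o L_k o ... o sigma o L_0.\<close>
fun hidden :: "nat \<Rightarrow> (nat \<Rightarrow> 'd::finite \<Rightarrow> real) \<Rightarrow> (nat \<Rightarrow> real)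
    \<Rightarrow> (nat \<Rightarrow> nat \<Rightarrow> nat \<Rightarrow> real) \<Rightarrow> (nat \<Rightarrow> nat \<Rightarrow> real) \<Rightarrow> nat \<Rightarrow> real^'d \<Rightarrow> (nat \<Rightarrow> real)" where
  "hidden N W0 b0 Ws bs 0 x = act_vec N (affine_in N W0 b0 x)"
| "hidden N W0 b0 Ws bs (Suc k) x = act_vec N (affine_NN N (Ws (Suc k)) (bs (Suc k)) (hidden N W0 b0 Ws bs k x))"

text \<open>H_d(N,L): L_L o sigma o L_{L-1} o ... o sigma o L_0 (L >= 1 activation layers).\<close>
definition H :: "nat \<Rightarrow> nat \<Rightarrow> (real^'d::finite \<Rightarrow> real) set" where
  "H N L = {\<phi>. \<exists>W0 b0 Ws bs w c. \<phi> = (\<lambda>x. (\<Sum>j<N. w j * hidden N W0 b0 Ws bs (L - 1) x j) + c)}"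

text \<open>C_d(E_1,...,E_J) with sets indexed E 0, ..., E (J-1).\<close>
definition C :: "(nat \<Rightarrow> (real^'d::finite) set) \<Rightarrow> nat \<Rightarrow> (real^'d \<Rightarrow> real) set" where
  "C Es J = {f. \<exists>r. (\<forall>j<J. r j \<in> \<rat>) \<and> f = (\<lambda>x. \<Sum>j<J. r j * indicator (Es j) x)}"

definition restr_set :: "('a \<Rightarrow> 'b) set \<Rightarrow> 'a set \<Rightarrow> ('a \<Rightarrow> 'b) set" where
  "restr_set F E = (\<lambda>f. restrict f E) ` F"

end

theory Submission
  imports Defs "HOL-Computational_Algebra.Polynomial"
begin

text \<open>
  Since the \<open>E\<^sub>j\<close> are compact and disjoint, they are a positive distance apart, so a fine grid has
  cells meeting at most one of them, and the step function is a function of the cell. A network of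
  fixed size computes, for each of \<open>d + 1\<close> shifted copies of the grid, the integer coordinates of
  the cell of \<open>x\<close> exactly (using the periodic part \<open>sigma1\<close> of the activation) as long as \<open>x\<close> is
  not near a cell boundary, and packs them into one integer code \<open>c\<close>. For a suitable \<open>\<gamma>\<close>, the
  numbers \<open>1 / (c + \<gamma>)\<close> are linearly independent over \<open>\<int>\<close>, so by Kronecker's theorem one
  parameter \<open>t\<close> makes \<open>sigma1 (t / (c + \<gamma>))\<close> approximate the label of every cell at once; rounding
  makes it exact. The shifted grids are blended with piecewise linear weights that vanish near
  cell boundaries, and since \<open>1 + sigma2 (- v) = 1 / (v + 1)\<close>, the negative part of the activation
  computes the products and the normalising division exactly.
\<close>

section \<open>The activation function\<close>

lemma sigma1_periodic_int: "sigma1 (x + 2 * of_int n) = sigma1 x"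
proof -
  have "\<lfloor>(x + 2 * of_int n + 1) / 2\<rfloor> = \<lfloor>(x + 1) / 2 + of_int n\<rfloor>" by (simp add: field_simps)
  also have "\<dots> = \<lfloor>(x + 1) / 2\<rfloor> + n" by simp
  finally show ?thesis unfolding sigma1_def by (simp add: algebra_simps)
qed

lemma sigma1_abs: "\<bar>x\<bar> \<le> 1 \<Longrightarrow> sigma1 x = \<bar>x\<bar>"
proof (cases "x = 1")
  case False
  assume "\<bar>x\<bar> \<le> 1"
  with False have "\<lfloor>(x + 1) / 2\<rfloor> = 0" by (simp add: floor_eq_iff abs_le_iff)
  then show ?thesis by (simp add: sigma1_def)
qed (simp add: sigma1_def)

lemma sigma1_representative_bound: "\<bar>(x::real) - 2 * of_int \<lfloor>(x + 1) / 2\<rfloor>\<bar> \<le> 1"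
proof -
  have "of_int \<lfloor>(x + 1) / 2\<rfloor> \<le> (x + 1) / 2" "(x + 1) / 2 < of_int \<lfloor>(x + 1) / 2\<rfloor> + 1"
    by linarith+
  then show ?thesis by (auto simp: abs_le_iff field_simps)
qed

lemma sigma1_bounds: "0 \<le> sigma1 x" "sigma1 x \<le> 1"
  using sigma1_representative_bound[of x] by (auto simp: sigma1_def)

lemma sigma1_le_dist: "sigma1 x \<le> \<bar>x - 2 * of_int n\<bar>"
proof (cases "n = \<lfloor>(x + 1) / 2\<rfloor>")
  case False
  then have "\<bar>of_int n - of_int \<lfloor>(x + 1) / 2\<rfloor>\<bar> \<ge> (1::real)"
    by (metis of_int_1_le_iff of_int_abs of_int_diff zero_less_abs_iff int_one_le_iff_zero_less right_minus_eq)
  then show ?thesis using sigma1_representative_bound[of x] by (simp add: sigma1_def)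
qed (simp add: sigma1_def)

lemma sigma1_lipschitz: "\<bar>sigma1 x - sigma1 y\<bar> \<le> \<bar>x - y\<bar>"
  using sigma1_le_dist[of x "\<lfloor>(y + 1) / 2\<rfloor>"] sigma1_le_dist[of y "\<lfloor>(x + 1) / 2\<rfloor>"]
  unfolding sigma1_def by linarith

lemma sigma1_close:
  assumes "0 \<le> y" "y \<le> 1" shows "\<bar>sigma1 (y + e + 2 * of_int n) - y\<bar> \<le> \<bar>e\<bar>"
  using sigma1_periodic_int[of "y + e" n] sigma1_lipschitz[of "y + e" y] assms by (simp add: sigma1_abs)

lemma act_nonneg: "0 \<le> x \<Longrightarrow> act x = sigma1 x"
  by (simp add: act_def)

lemma act_neg: "0 \<le> v \<Longrightarrow> act (- v) = - v / (v + 1)"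
  by (cases "v = 0") (simp_all add: act_def sigma1_def sigma2_def)

lemma one_plus_act_neg: "0 \<le> v \<Longrightarrow> 1 + act (- v) = 1 / (v + 1)"
  by (simp add: act_neg field_simps)

lemma act_id: "0 \<le> x \<Longrightarrow> x \<le> 1 \<Longrightarrow> act x = x"
  by (simp add: act_nonneg sigma1_abs)

lemma act_plus_2: "\<bar>z\<bar> \<le> 1 \<Longrightarrow> act (z + 2) = \<bar>z\<bar>"
  using sigma1_periodic_int[of z 1] by (simp add: act_nonneg sigma1_abs)

lemma act_periodic_int: "0 \<le> x + 2 * of_int n \<Longrightarrow> act (x + 2 * of_int n) = sigma1 x"
  by (simp add: act_nonneg sigma1_periodic_int)

section \<open>Networks built layer by layer\<close>

inductive affine_comb :: "'a set \<Rightarrow> ('a \<Rightarrow> real) set \<Rightarrow> ('a \<Rightarrow> real) \<Rightarrow> bool"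
  for X S where
  basis: "f \<in> S \<Longrightarrow> affine_comb X S f"
| const: "affine_comb X S (\<lambda>x. c)"
| add: "affine_comb X S f \<Longrightarrow> affine_comb X S g \<Longrightarrow> affine_comb X S (\<lambda>x. f x + g x)"
| scale: "affine_comb X S f \<Longrightarrow> affine_comb X S (\<lambda>x. c * f x)"
| cong: "affine_comb X S f \<Longrightarrow> \<forall>x\<in>X. f x = g x \<Longrightarrow> affine_comb X S g"

lemma affine_comb_affine: "affine_comb X S f \<Longrightarrow> affine_comb X S (\<lambda>x. a * f x + b)"
  by (intro affine_comb.add affine_comb.scale affine_comb.const)

lemma affine_comb_diff:
  assumes "affine_comb X S f" "affine_comb X S g"
  shows "affine_comb X S (\<lambda>x. f x - g x)"
proof (rule affine_comb.cong)
  show "affine_comb X S (\<lambda>x. f x + (-1) * g x)" using assms by (intro affine_comb.add affine_comb.scale)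
qed simp

lemma affine_comb_sum:
  "finite A \<Longrightarrow> (\<And>a. a \<in> A \<Longrightarrow> affine_comb X S (f a)) \<Longrightarrow> affine_comb X S (\<lambda>x. \<Sum>a\<in>A. f a x)"
proof (induction A rule: finite_induct)
  case empty
  then show ?case using affine_comb.const[of X S 0] by simp
next
  case (insert a A)
  then have "affine_comb X S (\<lambda>x. f a x + (\<Sum>a\<in>A. f a x))" by (intro affine_comb.add) auto
  then show ?case using insert by simp
qed

lemma affine_comb_max_0:
  assumes "affine_comb X S f" "affine_comb X S (\<lambda>x. \<bar>f x\<bar>)"
  shows "affine_comb X S (\<lambda>x. max 0 (f x))"
proof (rule affine_comb.cong)
  show "affine_comb X S (\<lambda>x. (1/2) * f x + (1/2) * \<bar>f x\<bar>)"
    using assms by (intro affine_comb.add affine_comb.scale)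
qed (auto simp: max_def)

lemma affine_comb_min:
  assumes "affine_comb X S f" "affine_comb X S g" "affine_comb X S (\<lambda>x. \<bar>f x - g x\<bar>)"
  shows "affine_comb X S (\<lambda>x. min (f x) (g x))"
proof (rule affine_comb.cong)
  show "affine_comb X S (\<lambda>x. (1/2) * f x + (1/2) * g x + (- 1/2) * \<bar>f x - g x\<bar>)"
    using assms by (intro affine_comb.add affine_comb.scale)
qed (auto simp: min_def abs_if field_simps)

lemma affine_comb_weights:
  assumes "finite I" "\<forall>f\<in>S. \<exists>i\<in>I. \<forall>x\<in>X. F x i = f x" and "affine_comb X S g"
  shows "\<exists>a c. \<forall>x\<in>X. g x = (\<Sum>j\<in>I. a j * F x j) + c"
  using assms(3)
proof induction
  case (basis f)
  then obtain i where i: "i \<in> I" "\<forall>x\<in>X. F x i = f x" using assms(2) by blast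
  have "\<forall>x\<in>X. f x = (\<Sum>j\<in>I. (if j = i then 1 else 0) * F x j) + 0"
    using i assms(1) by (simp add: if_distrib[of "\<lambda>a. a * _"] cong: if_cong)
  then show ?case by (intro exI[of _ "\<lambda>j. if j = i then 1 else 0"] exI[of _ 0])
next
  case (const c)
  have "\<forall>x\<in>X. c = (\<Sum>j\<in>I. 0 * F x j) + c" by simp
  then show ?case by (intro exI[of _ "\<lambda>j. 0"] exI[of _ c])
next
  case (add f g)
  then obtain a c a' c' where "\<forall>x\<in>X. f x = (\<Sum>j\<in>I. a j * F x j) + c"
    "\<forall>x\<in>X. g x = (\<Sum>j\<in>I. a' j * F x j) + c'"
    by blast
  then have "\<forall>x\<in>X. f x + g x = (\<Sum>j\<in>I. (a j + a' j) * F x j) + (c + c')"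
    by (simp add: distrib_right sum.distrib)
  then show ?case by (intro exI[of _ "\<lambda>j. a j + a' j"] exI[of _ "c + c'"])
next
  case (scale f c)
  then obtain a c0 where "\<forall>x\<in>X. f x = (\<Sum>j\<in>I. a j * F x j) + c0" by blast
  then have "\<forall>x\<in>X. c * f x = (\<Sum>j\<in>I. (c * a j) * F x j) + c * c0"
    by (simp add: distrib_left sum_distrib_left mult.assoc)
  then show ?case by (intro exI[of _ "\<lambda>j. c * a j"] exI[of _ "c * c0"])
next
  case (cong f g)
  then show ?case by metis
qed

definition neuron :: "'a set \<Rightarrow> ('a \<Rightarrow> real) set \<Rightarrow> ('a \<Rightarrow> real) \<Rightarrow> bool" where
  "neuron X S g \<longleftrightarrow> (\<exists>h. affine_comb X S h \<and> (\<forall>x\<in>X. g x = act (h x)))"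

definition layer_realizes :: "nat \<Rightarrow> (real^'d::finite) set \<Rightarrow> nat \<Rightarrow> (real^'d \<Rightarrow> real) set \<Rightarrow> bool" where
  "layer_realizes N X k S \<longleftrightarrow>
     (\<exists>W0 b0 Ws bs. \<forall>f\<in>S. \<exists>i<N. \<forall>x\<in>X. hidden N W0 b0 Ws bs k x i = f x)"

lemma hidden_cong:
  "(\<And>j. 0 < j \<Longrightarrow> j \<le> k \<Longrightarrow> Ws j = Ws' j \<and> bs j = bs' j) \<Longrightarrow>
    hidden N W0 b0 Ws bs k = hidden N W0 b0 Ws' bs' k"
  by (induction k) auto

lemma neurons_weights:
  assumes "finite I" "\<forall>f\<in>S. \<exists>i\<in>I. \<forall>x\<in>X. F x i = f x" "\<forall>g\<in>T. neuron X S g"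
  shows "\<exists>A C. \<forall>g\<in>T. \<forall>x\<in>X. g x = act ((\<Sum>j\<in>I. A g j * F x j) + C g)"
proof -
  have "\<forall>g\<in>T. \<exists>a c. \<forall>x\<in>X. g x = act ((\<Sum>j\<in>I. a j * F x j) + c)"
  proof
    fix g assume "g \<in> T"
    then obtain h where h: "affine_comb X S h" "\<forall>x\<in>X. g x = act (h x)"
      using assms(3) unfolding neuron_def by blast
    from affine_comb_weights[OF assms(1,2) h(1)]
    obtain a c where "\<forall>x\<in>X. h x = (\<Sum>j\<in>I. a j * F x j) + c" by blast
    then show "\<exists>a c. \<forall>x\<in>X. g x = act ((\<Sum>j\<in>I. a j * F x j) + c)" using h(2) by metis
  qed
  then show ?thesis by metis
qed

lemma layer_realizes_0:
  assumes T: "finite T" "card T \<le> N"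
    and neurons: "\<forall>g\<in>T. neuron X (range (\<lambda>i x. x $ i)) g"
  shows "layer_realizes N X 0 T"
proof -
  have "\<forall>f\<in>range (\<lambda>i x. x $ i). \<exists>i\<in>UNIV. \<forall>x\<in>X. x $ i = f x" by auto
  from neurons_weights[OF finite_class.finite_UNIV this neurons]
  obtain A C where AC: "\<forall>g\<in>T. \<forall>x\<in>X. g x = act ((\<Sum>j\<in>UNIV. A g j * x $ j) + C g)"
    by blast
  obtain e where e: "bij_betw e {0..<card T} T" using ex_bij_betw_nat_finite[OF T(1)] by blast
  define W0 where "W0 = (\<lambda>i j. if i < card T then A (e i) j else 0)"
  define b0 where "b0 = (\<lambda>i. if i < card T then C (e i) else 0)"
  show ?thesis unfolding layer_realizes_def
  proof (intro exI[of _ W0] exI[of _ b0] exI[of _ "\<lambda>_ _ _. 0"] exI[of _ "\<lambda>_ _. 0"] ballI)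
    fix g assume "g \<in> T"
    then obtain i where i: "i < card T" "e i = g" using e unfolding bij_betw_def by force
    have "\<forall>x\<in>X. hidden N W0 b0 (\<lambda>_ _ _. 0) (\<lambda>_ _. 0) 0 x i = g x"
      using i T(2) AC \<open>g \<in> T\<close> by (simp add: act_vec_def affine_in_def W0_def b0_def)
    then show "\<exists>i<N. \<forall>x\<in>X. hidden N W0 b0 (\<lambda>_ _ _. 0) (\<lambda>_ _. 0) 0 x i = g x"
      using i T(2) by (meson order_less_le_trans)
  qed
qed

lemma layer_realizes_Suc:
  assumes S: "layer_realizes N X k S" and T: "finite T" "card T \<le> N"
    and neurons: "\<forall>g\<in>T. neuron X S g"
  shows "layer_realizes N X (Suc k) T"
proof -
  obtain W0 b0 Ws bs where net: "\<forall>f\<in>S. \<exists>i<N. \<forall>x\<in>X. hidden N W0 b0 Ws bs k x i = f x"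
    using S unfolding layer_realizes_def by blast
  let ?F = "hidden N W0 b0 Ws bs k"
  from neurons_weights[OF finite_lessThan _ neurons, where F = ?F] net
  obtain A C where AC: "\<forall>g\<in>T. \<forall>x\<in>X. g x = act ((\<Sum>j<N. A g j * ?F x j) + C g)"
    by blast
  obtain e where e: "bij_betw e {0..<card T} T" using ex_bij_betw_nat_finite[OF T(1)] by blast
  define Ws' where "Ws' = Ws(Suc k := (\<lambda>i j. if i < card T then A (e i) j else 0))"
  define bs' where "bs' = bs(Suc k := (\<lambda>i. if i < card T then C (e i) else 0))"
  have hk: "hidden N W0 b0 Ws' bs' k = ?F"
    by (rule hidden_cong) (auto simp: Ws'_def bs'_def)
  show ?thesis unfolding layer_realizes_def
  proof (intro exI[of _ W0] exI[of _ b0] exI[of _ Ws'] exI[of _ bs'] ballI)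
    fix g assume "g \<in> T"
    then obtain i where i: "i < card T" "e i = g" using e unfolding bij_betw_def by force
    have "hidden N W0 b0 Ws' bs' (Suc k) x i = g x" if "x \<in> X" for x
    proof -
      have "Ws' (Suc k) = (\<lambda>i j. if i < card T then A (e i) j else 0)"
        "bs' (Suc k) = (\<lambda>i. if i < card T then C (e i) else 0)"
        by (simp_all add: Ws'_def bs'_def)
      then have "hidden N W0 b0 Ws' bs' (Suc k) x i = act ((\<Sum>j<N. A g j * ?F x j) + C g)"
        using i T(2) by (simp only: hidden.simps hk) (simp add: act_vec_def affine_NN_def)
      also have "\<dots> = g x" using AC \<open>g \<in> T\<close> \<open>x \<in> X\<close> by metis
      finally show ?thesis .
    qed
    then show "\<exists>i<N. \<forall>x\<in>X. hidden N W0 b0 Ws' bs' (Suc k) x i = g x" using i T(2)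
      by (meson order_less_le_trans)
  qed
qed

lemma layer_realizes_output:
  assumes "layer_realizes N X (L - 1) S" "affine_comb X S f"
  shows "restrict f X \<in> restr_set (H N L) X"
proof -
  obtain W0 b0 Ws bs where net: "\<forall>f\<in>S. \<exists>i<N. \<forall>x\<in>X. hidden N W0 b0 Ws bs (L - 1) x i = f x"
    using assms(1) unfolding layer_realizes_def by blast
  from affine_comb_weights[OF finite_lessThan _ assms(2)] net
  obtain a c where ac: "\<forall>x\<in>X. f x = (\<Sum>j<N. a j * hidden N W0 b0 Ws bs (L - 1) x j) + c"
    by blast
  define \<phi> where "\<phi> = (\<lambda>x. (\<Sum>j<N. a j * hidden N W0 b0 Ws bs (L - 1) x j) + c)"
  have "\<phi> \<in> H N L" unfolding H_def \<phi>_def by blast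
  moreover have "restrict f X = restrict \<phi> X" using ac by (auto simp: \<phi>_def restrict_def)
  ultimately show ?thesis unfolding restr_set_def by blast
qed

text \<open>On inputs bounded by \<open>B\<close>, \<open>relay B f\<close> passes \<open>f\<close> (rescaled into \<open>[0, 1]\<close>) to the next
  layer, \<open>abs_unit B f\<close> computes \<open>\<bar>f\<bar>\<close> (using periodicity of \<open>sigma1\<close>), and \<open>recip_unit f\<close>
  computes \<open>1 / (f + 1)\<close> for \<open>f \<ge> 0\<close> (using \<open>sigma2\<close>), all up to affine maps.\<close>
definition relay :: "real \<Rightarrow> ('a \<Rightarrow> real) \<Rightarrow> 'a \<Rightarrow> real" where
  "relay B f = (\<lambda>x. act ((f x + B) / (2 * B)))"

definition abs_unit :: "real \<Rightarrow> ('a \<Rightarrow> real) \<Rightarrow> 'a \<Rightarrow> real" where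
  "abs_unit B f = (\<lambda>x. act (f x / B + 2))"

definition recip_unit :: "('a \<Rightarrow> real) \<Rightarrow> 'a \<Rightarrow> real" where
  "recip_unit f = (\<lambda>x. act (- f x))"

lemma neuron_act: "affine_comb X S h \<Longrightarrow> neuron X S (\<lambda>x. act (h x))"
  unfolding neuron_def by blast

lemma neuron_relay:
  assumes "affine_comb X S f" shows "neuron X S (relay B f)"
  unfolding neuron_def relay_def
proof (intro exI conjI)
  show "affine_comb X S (\<lambda>x. (1 / (2 * B)) * f x + B / (2 * B))"
    using assms by (rule affine_comb_affine)
qed (simp add: add_divide_distrib)

lemma neuron_abs_unit:
  assumes "affine_comb X S f" shows "neuron X S (abs_unit B f)"
  unfolding neuron_def abs_unit_def
proof (intro exI conjI)
  show "affine_comb X S (\<lambda>x. (1 / B) * f x + 2)" using assms by (rule affine_comb_affine)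
qed simp

lemma neuron_recip_unit:
  assumes "affine_comb X S f" shows "neuron X S (recip_unit f)"
  unfolding neuron_def recip_unit_def
proof (intro exI conjI)
  show "affine_comb X S (\<lambda>x. (-1) * f x + 0)" using assms by (rule affine_comb_affine)
qed simp

lemma affine_comb_relay:
  assumes "relay B f \<in> S" "B > 0" "\<forall>x\<in>X. \<bar>f x\<bar> \<le> B"
  shows "affine_comb X S f"
proof (rule affine_comb.cong)
  show "affine_comb X S (\<lambda>x. (2 * B) * relay B f x + (- B))"
    using assms(1) by (intro affine_comb_affine affine_comb.basis)
  show "\<forall>x\<in>X. (2 * B) * relay B f x + (- B) = f x"
  proof
    fix x assume "x \<in> X"
    then have "0 \<le> (f x + B) / (2 * B)" "(f x + B) / (2 * B) \<le> 1"
      using assms(2,3) by (auto simp: field_simps)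
    then show "(2 * B) * relay B f x + (- B) = f x" using assms(2) by (simp add: relay_def act_id)
  qed
qed

lemma affine_comb_abs_unit:
  assumes "abs_unit B f \<in> S" "B > 0" "\<forall>x\<in>X. \<bar>f x\<bar> \<le> B"
  shows "affine_comb X S (\<lambda>x. \<bar>f x\<bar>)"
proof (rule affine_comb.cong)
  show "affine_comb X S (\<lambda>x. B * abs_unit B f x + 0)"
    using assms(1) by (intro affine_comb_affine affine_comb.basis)
  show "\<forall>x\<in>X. B * abs_unit B f x + 0 = \<bar>f x\<bar>"
  proof
    fix x assume "x \<in> X"
    then have "\<bar>f x / B\<bar> \<le> 1" using assms(2,3) by (auto simp: field_simps)
    then show "B * abs_unit B f x + 0 = \<bar>f x\<bar>"
      using assms(2) by (simp add: abs_unit_def act_plus_2 abs_divide)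
  qed
qed

lemma affine_comb_recip_unit:
  assumes "recip_unit f \<in> S" "\<forall>x\<in>X. 0 \<le> f x"
  shows "affine_comb X S (\<lambda>x. 1 / (f x + 1))"
proof (rule affine_comb.cong)
  show "affine_comb X S (\<lambda>x. 1 * recip_unit f x + 1)"
    using assms(1) by (intro affine_comb_affine affine_comb.basis)
  show "\<forall>x\<in>X. 1 * recip_unit f x + 1 = 1 / (f x + 1)"
    using assms(2) one_plus_act_neg by (simp add: recip_unit_def add.commute)
qed

lemma layer_realizes_relay_later:
  assumes "layer_realizes N X k S" "affine_comb X S f" "B > 0" "\<forall>x\<in>X. \<bar>f x\<bar> \<le> B" "N \<ge> 1"
    and "k < k'"
  shows "layer_realizes N X k' {relay B f}"
  using \<open>k < k'\<close>
proof (induction k')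
  case (Suc k')
  have "layer_realizes N X k' (if k' = k then S else {relay B f})"
    using Suc assms(1) by auto
  moreover have "affine_comb X (if k' = k then S else {relay B f}) f"
    using assms(2-4) by (auto intro: affine_comb_relay)
  ultimately show ?case
    using \<open>N \<ge> 1\<close> by (intro layer_realizes_Suc) (auto intro: neuron_relay)
qed simp

lemma card_set_le_length: "length xs \<le> n \<Longrightarrow> card (set xs) \<le> n"
  using card_length order_trans by blast

section \<open>Exact rounding\<close>

definition nearest_int :: "real \<Rightarrow> int" where
  "nearest_int u = \<lfloor>u + 1/2\<rfloor>"

text \<open>\<open>centred_wave\<close> is \<open>1\<close>-periodic and equals \<open>t\<close> for \<open>\<bar>t\<bar> \<le> 1/4\<close>; \<open>twice_dist_int u\<close> is
  \<open>2 * \<bar>u - nearest_int u\<bar>\<close>. Both are single neurons on inputs \<open>u \<ge> 0\<close>.\<close>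
definition centred_wave :: "real \<Rightarrow> real" where
  "centred_wave u = sigma1 (2 * u + 1/2) / 2 - 1/4"

definition twice_dist_int :: "real \<Rightarrow> real" where
  "twice_dist_int u = sigma1 (2 * u)"

definition dist_int_excess :: "real \<Rightarrow> real" where
  "dist_int_excess u = max 0 (twice_dist_int u / 2 - 1/4)"

definition round_clip :: "real \<Rightarrow> real \<Rightarrow> real" where
  "round_clip Ms u = min (dist_int_excess u) (Ms * centred_wave u)"

definition round_offset :: "real \<Rightarrow> real \<Rightarrow> real" where
  "round_offset Ms u = centred_wave u + 2 * max (- dist_int_excess u) (round_clip Ms u)"

text \<open>A piecewise linear function, built from \<open>sigma1\<close>, \<open>min\<close> and \<open>max\<close>, that rounds \<open>u\<close> to the
  nearest integer exactly, except within \<open>1/(4 * Ms)\<close> of a half-integer.\<close>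
definition round_net :: "real \<Rightarrow> real \<Rightarrow> real" where
  "round_net Ms u = u - round_offset Ms u"

lemma nearest_int_bounds: "- 1/2 \<le> u - of_int (nearest_int u)" "u - of_int (nearest_int u) < 1/2"
  unfolding nearest_int_def by linarith+

lemma twice_dist_int_eq: "twice_dist_int u = 2 * \<bar>u - of_int (nearest_int u)\<bar>"
proof -
  define t where "t = u - of_int (nearest_int u)"
  have t: "-1/2 \<le> t" "t < 1/2" using nearest_int_bounds[of u] by (auto simp: t_def)
  have "twice_dist_int u = sigma1 (2 * t + 2 * of_int (nearest_int u))"
    by (simp add: twice_dist_int_def t_def algebra_simps)
  also have "\<dots> = 2 * \<bar>t\<bar>" using t by (simp add: sigma1_periodic_int sigma1_abs)
  finally show ?thesis unfolding t_def .
qed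

lemma twice_dist_int_bounds: "0 \<le> twice_dist_int u" "twice_dist_int u \<le> 1"
  using sigma1_bounds by (auto simp: twice_dist_int_def)

lemma centred_wave_bound: "\<bar>centred_wave u\<bar> \<le> 1/4"
  using sigma1_bounds[of "2 * u + 1/2"] unfolding centred_wave_def abs_le_iff by linarith

lemma dist_int_excess_bounds: "0 \<le> dist_int_excess u" "dist_int_excess u \<le> 1/4"
  using twice_dist_int_bounds[of u] by (auto simp: dist_int_excess_def max_def)

lemma centred_wave_periodic_int: "centred_wave (t + of_int n) = centred_wave t"
  using sigma1_periodic_int[of "2 * t + 1/2" n] by (simp add: centred_wave_def algebra_simps)

lemma centred_wave_small: "\<bar>t\<bar> \<le> 1/4 \<Longrightarrow> centred_wave t = t"
  using sigma1_abs[of "2 * t + 1/2"] unfolding centred_wave_def abs_le_iff by linarith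

lemma centred_wave_left: "-1/2 \<le> t \<Longrightarrow> t < -1/4 \<Longrightarrow> centred_wave t = - t - 1/2"
  using sigma1_abs[of "2 * t + 1/2"] unfolding centred_wave_def abs_le_iff by linarith

lemma centred_wave_right: "1/4 < t \<Longrightarrow> t \<le> 1/2 \<Longrightarrow> centred_wave t = 1/2 - t"
  using sigma1_periodic_int[of "2 * t - 3/2" 1] sigma1_abs[of "2 * t - 3/2"]
  unfolding centred_wave_def abs_le_iff by (simp add: algebra_simps)

lemma round_by_centred_wave: "\<bar>y - of_int n\<bar> \<le> 1/4 \<Longrightarrow> y - centred_wave y = of_int n"
  using centred_wave_periodic_int[of "y - of_int n" n] centred_wave_small[of "y - of_int n"] by simp

lemma round_offset_eq:
  assumes Ms: "Ms \<ge> 1" and t: "\<bar>t\<bar> \<le> 1/2 - 1/(4 * Ms)"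
  shows "round_offset Ms (t + of_int n) = t"
proof -
  let ?u = "t + of_int n"
  have "Ms * (1/2 - \<bar>t\<bar>) \<ge> Ms * (1/(4 * Ms))" using t Ms by (intro mult_left_mono) auto
  then have steep: "Ms * (1/2 - \<bar>t\<bar>) \<ge> 1/4" using Ms by simp
  have "1/(4 * Ms) > 0" using Ms by simp
  then have t_half: "\<bar>t\<bar> \<le> 1/2" using t by linarith
  have "twice_dist_int ?u = \<bar>2 * t\<bar>"
    using sigma1_periodic_int[of "2 * t" n] t_half
    by (simp add: twice_dist_int_def sigma1_abs algebra_simps)
  then have excess: "dist_int_excess ?u = max 0 (\<bar>t\<bar> - 1/4)" by (simp add: dist_int_excess_def)
  have wave: "centred_wave ?u = centred_wave t" by (rule centred_wave_periodic_int)
  consider "\<bar>t\<bar> \<le> 1/4" | "1/4 < t" | "t < -1/4" by linarith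
  then show ?thesis
  proof cases
    case 1
    then show ?thesis
      by (simp add: round_offset_def round_clip_def wave excess centred_wave_small)
  next
    case 2
    then have "centred_wave t = 1/2 - t" using t_half by (intro centred_wave_right) auto
    moreover have "Ms * (1/2 - t) \<ge> 1/4" using steep 2 by simp
    then have "Ms * (1/2 - t) \<ge> t - 1/4" using t_half by linarith
    ultimately show ?thesis using 2 by (simp add: round_offset_def round_clip_def wave excess)
  next
    case 3
    then have wave_t: "centred_wave t = - t - 1/2" using t_half by (intro centred_wave_left) auto
    have "Ms * (1/2 + t) \<ge> 1/4" using steep 3 by simp
    moreover have "Ms * centred_wave t = - (Ms * (1/2 + t))" by (simp add: wave_t algebra_simps)
    ultimately have "Ms * centred_wave t \<le> t + 1/4" using t_half by linarith
    then show ?thesis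
      using 3 by (simp add: round_offset_def round_clip_def wave excess wave_t)
  qed
qed

lemma round_net_exact:
  assumes "Ms \<ge> 1" "\<bar>u - of_int n\<bar> \<le> 1/2 - 1/(4 * Ms)"
  shows "round_net Ms u = of_int n"
  using round_offset_eq[OF assms(1), of "u - of_int n" n] assms(2) by (simp add: round_net_def)

lemma round_offset_bound: "\<bar>round_offset Ms u\<bar> \<le> 3/4"
proof -
  have "\<bar>max (- dist_int_excess u) (round_clip Ms u)\<bar> \<le> dist_int_excess u"
    using dist_int_excess_bounds[of u] by (auto simp: round_clip_def)
  then show ?thesis
    using centred_wave_bound[of u] dist_int_excess_bounds[of u]
    unfolding round_offset_def abs_le_iff by linarith
qed

lemma round_clip_bound: "Ms \<ge> 0 \<Longrightarrow> \<bar>round_clip Ms u\<bar> \<le> Ms + 1"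
proof -
  assume "Ms \<ge> 0"
  then have "Ms * \<bar>centred_wave u\<bar> \<le> Ms * (1/4)" using centred_wave_bound by (intro mult_left_mono)
  then have "\<bar>Ms * centred_wave u\<bar> \<le> Ms" using \<open>Ms \<ge> 0\<close> by (simp add: abs_mult)
  then show ?thesis using dist_int_excess_bounds[of u]
    unfolding round_clip_def abs_le_iff min_def by auto
qed

section \<open>Exact products\<close>

text \<open>Two layers of \<open>recip_unit\<close>s turn \<open>p\<close> into \<open>c / (c * (1/p - 1/(p + 1))) = p * (p + 1)\<close>,
  and products follow by polarisation.\<close>
definition recip_gap :: "real \<Rightarrow> ('a \<Rightarrow> real) \<Rightarrow> 'a \<Rightarrow> real" where
  "recip_gap c p x = c * (1 / p x - 1 / (p x + 1)) - 1"

lemma recip_gap_inverse: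
  fixes p :: "'a \<Rightarrow> real"
  assumes "p x \<ge> 1" "c \<ge> p x * (p x + 1)"
  shows "recip_gap c p x \<ge> 0" "c * (1 / (recip_gap c p x + 1)) = p x * (p x + 1)"
proof -
  have pos: "p x * (p x + 1) > 0" using assms(1) by (intro mult_pos_pos) auto
  have eq: "c * (1 / p x - 1 / (p x + 1)) = c / (p x * (p x + 1))"
    using assms(1) by (simp add: field_simps)
  then show "recip_gap c p x \<ge> 0" using assms pos by (simp add: recip_gap_def)
  have "c > 0" using assms pos by linarith
  then show "c * (1 / (recip_gap c p x + 1)) = p x * (p x + 1)"
    using pos by (simp add: recip_gap_def eq)
qed

definition polar :: "real \<Rightarrow> real \<Rightarrow> ('a \<Rightarrow> real) \<Rightarrow> ('a \<Rightarrow> real) \<Rightarrow> 'a \<Rightarrow> real" where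
  "polar B s a b x = a x + s * b x + (2 * B + 1)"

definition square_bound :: "real \<Rightarrow> real" where
  "square_bound B = (3 * B + 2) * (3 * B + 3)"

definition product_units1 :: "real \<Rightarrow> ('a \<Rightarrow> real) \<Rightarrow> ('a \<Rightarrow> real) \<Rightarrow> ('a \<Rightarrow> real) list" where
  "product_units1 B a b =
    [recip_unit (\<lambda>x. polar B 1 a b x - 1), recip_unit (polar B 1 a b),
     recip_unit (\<lambda>x. polar B (-1) a b x - 1), recip_unit (polar B (-1) a b), relay B b]"

definition product_units2 :: "real \<Rightarrow> ('a \<Rightarrow> real) \<Rightarrow> ('a \<Rightarrow> real) \<Rightarrow> ('a \<Rightarrow> real) list" where
  "product_units2 B a b =
    [recip_unit (recip_gap (square_bound B) (polar B 1 a b)),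
     recip_unit (recip_gap (square_bound B) (polar B (-1) a b)), relay B b]"

lemma polar_bounds:
  assumes "\<bar>a x\<bar> \<le> 1" "\<bar>b x\<bar> \<le> B" "B \<ge> 1" "\<bar>s\<bar> = 1"
  shows "polar B s a b x \<ge> 1" "square_bound B \<ge> polar B s a b x * (polar B s a b x + 1)"
proof -
  have "\<bar>s * b x\<bar> \<le> B" using assms(2,4) by (simp add: abs_mult)
  then have bounds: "1 \<le> polar B s a b x" "polar B s a b x \<le> 3 * B + 2"
    using assms(1,3) unfolding polar_def abs_le_iff by linarith+
  then show "polar B s a b x \<ge> 1" by simp
  show "square_bound B \<ge> polar B s a b x * (polar B s a b x + 1)"
    unfolding square_bound_def using bounds by (intro mult_mono) auto
qed

lemma neuron_product_units1:
  assumes "affine_comb X S a" "affine_comb X S b" "g \<in> set (product_units1 B a b)"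
  shows "neuron X S g"
proof -
  have polar: "affine_comb X S (polar B s a b)" for s
    unfolding polar_def using assms(1,2) by (intro affine_comb.add affine_comb.scale affine_comb.const)
  then have "affine_comb X S (\<lambda>x. polar B s a b x - 1)" for s
    by (intro affine_comb_diff affine_comb.const)
  then show ?thesis using assms polar
    by (auto simp: product_units1_def intro: neuron_recip_unit neuron_relay)
qed

lemma affine_comb_recip_gap:
  assumes units: "recip_unit (\<lambda>x. p x - 1) \<in> S" "recip_unit p \<in> S" and p: "\<forall>x\<in>X. p x \<ge> 1"
  shows "affine_comb X S (recip_gap c p)"
proof -
  have "affine_comb X S (\<lambda>x. 1 / ((p x - 1) + 1))" "affine_comb X S (\<lambda>x. 1 / (p x + 1))"
    using p by (intro affine_comb_recip_unit[OF units(1)] affine_comb_recip_unit[OF units(2)]; force)+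
  then have "affine_comb X S (\<lambda>x. c * (1 / ((p x - 1) + 1) - 1 / (p x + 1)) - 1)"
    by (intro affine_comb_diff affine_comb.scale affine_comb.const)
  then show ?thesis by (rule affine_comb.cong) (simp add: recip_gap_def)
qed

lemma neuron_product_units2:
  assumes units: "set (product_units1 B a b) \<subseteq> S"
    and bounds: "\<forall>x\<in>X. \<bar>a x\<bar> \<le> 1 \<and> \<bar>b x\<bar> \<le> B" "B \<ge> 1"
    and g: "g \<in> set (product_units2 B a b)"
  shows "neuron X S g"
proof -
  have "affine_comb X S (recip_gap (square_bound B) (polar B s a b))" if "s = 1 \<or> s = -1" for s
    using that units polar_bounds(1)[of a _ b B s] bounds
    by (intro affine_comb_recip_gap) (auto simp: product_units1_def)
  moreover have "affine_comb X S b"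
    using units bounds by (intro affine_comb_relay[of B]) (auto simp: product_units1_def)
  ultimately show ?thesis
    using g by (auto simp: product_units2_def intro: neuron_recip_unit neuron_relay)
qed

lemma affine_comb_product:
  assumes units: "set (product_units2 B a b) \<subseteq> S"
    and bounds: "\<forall>x\<in>X. \<bar>a x\<bar> \<le> 1 \<and> \<bar>b x\<bar> \<le> B" "B \<ge> 1"
  shows "affine_comb X S (\<lambda>x. a x * b x)"
proof -
  let ?c = "square_bound B"
  have square: "affine_comb X S (\<lambda>x. polar B s a b x * (polar B s a b x + 1))"
    if s: "s = 1 \<or> s = -1" for s
  proof (rule affine_comb.cong)
    have gap: "recip_gap ?c (polar B s a b) x \<ge> 0"
      "?c * (1 / (recip_gap ?c (polar B s a b) x + 1)) = polar B s a b x * (polar B s a b x + 1)"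
      if "x \<in> X" for x
      using that s bounds polar_bounds[of a x b B s] recip_gap_inverse[of "polar B s a b" x ?c] by auto
    have "recip_unit (recip_gap ?c (polar B s a b)) \<in> S" using s units by (auto simp: product_units2_def)
    then show "affine_comb X S (\<lambda>x. ?c * (1 / (recip_gap ?c (polar B s a b) x + 1)))"
      using gap(1) by (intro affine_comb.scale affine_comb_recip_unit) auto
    show "\<forall>x\<in>X. ?c * (1 / (recip_gap ?c (polar B s a b) x + 1)) = polar B s a b x * (polar B s a b x + 1)"
      using gap(2) by auto
  qed
  have "affine_comb X S b"
    using units bounds by (intro affine_comb_relay[of B]) (auto simp: product_units2_def)
  with square[of 1] square[of "-1"]
  have "affine_comb X S (\<lambda>x. (1/4) * (polar B 1 a b x * (polar B 1 a b x + 1))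
      + (- 1/4) * (polar B (-1) a b x * (polar B (-1) a b x + 1)) + (- 1/2 - (2 * B + 1)) * b x)"
    by (intro affine_comb.add affine_comb.scale) auto
  then show ?thesis by (rule affine_comb.cong) (simp add: polar_def algebra_simps)
qed

section \<open>Interpolating finitely many labels by one wave\<close>

definition recip_sum_numer :: "nat \<Rightarrow> int list \<Rightarrow> real poly" where
  "recip_sum_numer n ws = (\<Sum>c<n. smult (of_int (ws ! c)) (\<Prod>c'\<in>{..<n} - {c}. [:real c', 1:]))"

lemma poly_recip_sum_numer:
  "poly (recip_sum_numer n ws) x = (\<Sum>c<n. of_int (ws ! c) * (\<Prod>c'\<in>{..<n} - {c}. (real c' + x)))"
  by (simp add: recip_sum_numer_def poly_sum poly_prod)

lemma poly_recip_sum_numer_eq_sum: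
  assumes "\<gamma> > 0"
  shows "poly (recip_sum_numer n ws) \<gamma> =
    2 * (\<Prod>c<n. real c + \<gamma>) * (\<Sum>c<n. of_int (ws ! c) * (1 / (2 * (real c + \<gamma>))))"
proof -
  have "poly (recip_sum_numer n ws) \<gamma> =
      (\<Sum>c<n. of_int (ws ! c) * ((\<Prod>c'<n. real c' + \<gamma>) * (2 * (1 / (2 * (real c + \<gamma>))))))"
  proof (unfold poly_recip_sum_numer, rule sum.cong[OF refl])
    fix c assume c: "c \<in> {..<n}"
    have "(\<Prod>c'<n. real c' + \<gamma>) = (real c + \<gamma>) * (\<Prod>c'\<in>{..<n} - {c}. real c' + \<gamma>)"
      using c by (subst prod.remove[of _ c]) auto
    then show "of_int (ws ! c) * (\<Prod>c'\<in>{..<n} - {c}. real c' + \<gamma>) =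
        of_int (ws ! c) * ((\<Prod>c'<n. real c' + \<gamma>) * (2 * (1 / (2 * (real c + \<gamma>)))))"
      using assms by (simp add: add_nonneg_pos field_simps)
  qed
  then show ?thesis by (simp add: sum_distrib_left algebra_simps)
qed

lemma recip_sum_numer_nonzero:
  assumes "c0 < n" "ws ! c0 \<noteq> 0"
  shows "recip_sum_numer n ws \<noteq> 0"
proof -
  have "(\<Prod>c'\<in>{..<n} - {c}. (real c' + - real c0)) = 0" if "c \<noteq> c0" "c < n" for c
    using that assms(1) by (intro prod_zero) auto
  then have "(\<Sum>c\<in>{..<n} - {c0}. of_int (ws ! c) * (\<Prod>c'\<in>{..<n} - {c}. (real c' + - real c0))) = 0"
    by (intro sum.neutral) auto
  then have "poly (recip_sum_numer n ws) (- real c0) =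
      of_int (ws ! c0) * (\<Prod>c'\<in>{..<n} - {c0}. (real c' + - real c0))"
    unfolding poly_recip_sum_numer using assms(1) by (subst sum.remove[of _ c0]) auto
  moreover have "(\<Prod>c'\<in>{..<n} - {c0}. (real c' + - real c0)) \<noteq> 0"
    by (subst prod_zero_iff) auto
  ultimately have "poly (recip_sum_numer n ws) (- real c0) \<noteq> 0" using assms(2) by simp
  then show ?thesis by auto
qed

lemma exists_common_nonroot:
  "\<exists>\<gamma>::real. 1 < \<gamma> \<and> \<gamma> < 2 \<and> (\<forall>ws. poly (recip_sum_numer n ws) \<gamma> = 0 \<longrightarrow> recip_sum_numer n ws = 0)"
proof -
  define A where "A = (\<Union>ws. {\<gamma>. recip_sum_numer n ws \<noteq> 0 \<and> poly (recip_sum_numer n ws) \<gamma> = 0})"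
  have "countable A" unfolding A_def
  proof (intro countable_UN[of UNIV] countableI_type)
    fix ws
    show "countable {\<gamma>. recip_sum_numer n ws \<noteq> 0 \<and> poly (recip_sum_numer n ws) \<gamma> = 0}"
      using poly_roots_finite[of "recip_sum_numer n ws"]
      by (cases "recip_sum_numer n ws = 0") (simp_all add: countable_finite)
  qed
  then have "\<not> {1<..<2::real} \<subseteq> A"
    using uncountable_open_interval[of 1 "2::real"] countable_subset by auto
  then obtain \<gamma> where "\<gamma> \<in> {1<..<2}" "\<gamma> \<notin> A" by blast
  then show ?thesis unfolding A_def by auto
qed

lemma module_int_real: "Modules.module (\<lambda>r. (*) (real_of_int r))"
  by (simp add: Modules.module.intro distrib_left mult.commute)

lemma recips_independent:
  fixes \<gamma> :: real
  assumes g: "1 < \<gamma>" "\<forall>ws. poly (recip_sum_numer n ws) \<gamma> = 0 \<longrightarrow> recip_sum_numer n ws = 0"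
  defines "\<theta> \<equiv> (\<lambda>c::nat. 1 / (2 * (real c + \<gamma>)))"
  shows "module.independent (\<lambda>r. (*) (real_of_int r)) (\<theta> ` {..<n})" "inj_on \<theta> {..<n}"
proof -
  have pos: "real c + \<gamma> > 0" for c using g by (simp add: add_nonneg_pos)
  show inj: "inj_on \<theta> {..<n}"
    by (rule inj_onI) (use pos in \<open>auto simp: \<theta>_def field_simps\<close>)
  interpret M: Modules.module "(\<lambda>r. (*) (real_of_int r))" by (rule module_int_real)
  show "M.independent (\<theta> ` {..<n})"
    unfolding M.independent_explicit_module
  proof (intro allI impI)
    fix t u v
    assume t: "finite t" "t \<subseteq> \<theta> ` {..<n}" and s: "(\<Sum>v\<in>t. real_of_int (u v) * v) = 0"
      and v: "v \<in> t"
    define I where "I = {c\<in>{..<n}. \<theta> c \<in> t}"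
    have tI: "t = \<theta> ` I" using t(2) by (auto simp: I_def)
    define ws where "ws = map (\<lambda>c. if \<theta> c \<in> t then u (\<theta> c) else 0) [0..<n]"
    have ws: "ws ! c = (if \<theta> c \<in> t then u (\<theta> c) else 0)" if "c < n" for c
      using that by (simp add: ws_def)
    have injI: "inj_on \<theta> I" using inj by (rule inj_on_subset) (auto simp: I_def)
    have "(\<Sum>c<n. of_int (ws ! c) * \<theta> c) = (\<Sum>c<n. if c \<in> I then real_of_int (u (\<theta> c)) * \<theta> c else 0)"
      by (rule sum.cong) (auto simp: ws I_def)
    also have "\<dots> = (\<Sum>c\<in>I. real_of_int (u (\<theta> c)) * \<theta> c)"
      by (subst sum.If_cases) (auto simp: I_def intro!: arg_cong2[where f=sum])
    also have "\<dots> = (\<Sum>v\<in>t. real_of_int (u v) * v)"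
      unfolding tI by (subst sum.reindex[OF injI]) simp
    finally have s2: "(\<Sum>c<n. of_int (ws ! c) * \<theta> c) = 0" using s by simp
    have "poly (recip_sum_numer n ws) \<gamma> = 0"
      using poly_recip_sum_numer_eq_sum[of \<gamma> n ws] g(1) s2 by (simp add: \<theta>_def)
    then have "recip_sum_numer n ws = 0" using g(2) by blast
    then have ws0: "ws ! c = 0" if "c < n" for c using recip_sum_numer_nonzero that by blast
    obtain c where "c \<in> I" "v = \<theta> c" using v tI by blast
    then show "u v = 0" using ws0[of c] by (auto simp: ws I_def)
  qed
qed

text \<open>Kronecker's theorem puts \<open>t / (2 * (c + \<gamma>))\<close> within \<open>1 / (8 * P)\<close> of \<open>lab c / (2 * P)\<close>
  modulo \<open>1\<close>, for all \<open>c < n\<close> at once.\<close>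
lemma kronecker_wave_fit:
  fixes lab :: "nat \<Rightarrow> nat" and n P :: nat
  assumes P: "P > 0" and lab: "\<forall>c<n. lab c \<le> P"
  shows "\<exists>\<gamma> t. 1 < \<gamma> \<and> (\<forall>c<n. \<bar>real P * sigma1 (t / (real c + \<gamma>)) - real (lab c)\<bar> \<le> 1/4)"
proof -
  obtain \<gamma> :: real where g: "1 < \<gamma>" "\<forall>ws. poly (recip_sum_numer n ws) \<gamma> = 0 \<longrightarrow> recip_sum_numer n ws = 0"
    using exists_common_nonroot by blast
  define \<theta> where "\<theta> = (\<lambda>c::nat. 1 / (2 * (real c + \<gamma>)))"
  define \<alpha> where "\<alpha> = (\<lambda>c::nat. real (lab c) / (2 * real P))"
  have ind: "module.independent (\<lambda>r. (*) (real_of_int r)) (\<theta> ` {..<n})" "inj_on \<theta> {..<n}"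
    using recips_independent[OF g] unfolding \<theta>_def by auto
  have eps: "1 / (8 * real P) > 0" using P by simp
  obtain t h where th: "\<And>c. c < n \<Longrightarrow> \<bar>t * \<theta> c - of_int (h c) - \<alpha> c\<bar> < 1 / (8 * real P)"
    using Kronecker_thm_1[OF ind eps, where \<alpha> = \<alpha>] by blast
  have "\<bar>real P * sigma1 (t / (real c + \<gamma>)) - real (lab c)\<bar> \<le> 1/4" if c: "c < n" for c
  proof -
    define y where "y = real (lab c) / real P"
    have y: "0 \<le> y" "y \<le> 1" using lab c P by (auto simp: y_def)
    have "real c + \<gamma> \<noteq> 0" "real P \<noteq> 0" using g P by (auto simp: add_nonneg_pos)
    then have "t / (real c + \<gamma>) = 2 * (t * \<theta> c)" "y = 2 * \<alpha> c"
      by (simp_all add: \<theta>_def \<alpha>_def y_def field_simps)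
    then have "t / (real c + \<gamma>) = y + 2 * (t * \<theta> c - of_int (h c) - \<alpha> c) + 2 * of_int (h c)"
      by (simp add: algebra_simps)
    then have "\<bar>sigma1 (t / (real c + \<gamma>)) - y\<bar> \<le> \<bar>2 * (t * \<theta> c - of_int (h c) - \<alpha> c)\<bar>"
      using sigma1_close[OF y, of "2 * (t * \<theta> c - of_int (h c) - \<alpha> c)" "h c"] by (simp only:)
    also have "\<dots> \<le> 1 / (4 * real P)" using th[OF c] by simp
    finally have "real P * \<bar>sigma1 (t / (real c + \<gamma>)) - y\<bar> \<le> real P * (1 / (4 * real P))"
      by (intro mult_left_mono) auto
    moreover have "real P * \<bar>sigma1 (t / (real c + \<gamma>)) - y\<bar> =
        \<bar>real P * (sigma1 (t / (real c + \<gamma>)) - y)\<bar>"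
      by (simp add: abs_mult)
    moreover have "real P * (sigma1 (t / (real c + \<gamma>)) - y) = real P * sigma1 (t / (real c + \<gamma>)) - real (lab c)"
      using P by (simp add: y_def right_diff_distrib)
    ultimately show ?thesis using P by simp
  qed
  then show ?thesis using g by blast
qed

lemma wave_fits_labels:
  fixes code lab :: "'a \<Rightarrow> nat"
  assumes "P > 0" and bounded: "\<forall>a\<in>A. code a < n \<and> lab a \<le> P"
    and consistent: "\<forall>a\<in>A. \<forall>b\<in>A. code a = code b \<longrightarrow> lab a = lab b"
  shows "\<exists>\<gamma> t. 1 < \<gamma> \<and> (\<forall>a\<in>A. \<bar>real P * sigma1 (t / (real (code a) + \<gamma>)) - real (lab a)\<bar> \<le> 1/4)"
proof -
  define rep where "rep c = (SOME a. a \<in> A \<and> code a = c)" for c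
  have rep: "rep (code a) \<in> A \<and> code (rep (code a)) = code a" if "a \<in> A" for a
  proof -
    have "\<exists>b. b \<in> A \<and> code b = code a" using that by blast
    then show ?thesis unfolding rep_def by (rule someI_ex)
  qed
  define lab' where "lab' c = (if \<exists>a\<in>A. code a = c then lab (rep c) else 0)" for c
  have lab': "lab' (code a) = lab a" if "a \<in> A" for a
  proof -
    have "lab (rep (code a)) = lab a" using consistent rep[OF that] that by blast
    then show ?thesis using that by (auto simp: lab'_def)
  qed
  have "lab' c \<le> P" for c
  proof (cases "\<exists>a\<in>A. code a = c")
    case True
    then obtain a where "a \<in> A" "code a = c" by blast
    then show ?thesis using lab' bounded by auto
  qed (simp add: lab'_def)
  then obtain \<gamma> t where "1 < \<gamma>" and fit: "\<forall>c<n. \<bar>real P * sigma1 (t / (real c + \<gamma>)) - real (lab' c)\<bar> \<le> 1/4"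
    using kronecker_wave_fit[OF \<open>P > 0\<close>] by blast
  have "\<bar>real P * sigma1 (t / (real (code a) + \<gamma>)) - real (lab a)\<bar> \<le> 1/4" if "a \<in> A" for a
    using fit bounded lab'[OF that] that by auto
  then show ?thesis using \<open>1 < \<gamma>\<close> by blast
qed

section \<open>Grids and cell codes\<close>

lemma separated_compact_family:
  fixes Es :: "nat \<Rightarrow> ('a::heine_borel) set"
  assumes dis: "\<And>i j. i < J \<Longrightarrow> j < J \<Longrightarrow> i \<noteq> j \<Longrightarrow> Es i \<inter> Es j = {}"
    and cpt: "\<And>j. j < J \<Longrightarrow> compact (Es j)"
  shows "\<exists>\<delta>>0. \<forall>i<J. \<forall>j<J. i \<noteq> j \<longrightarrow> (\<forall>x\<in>Es i. \<forall>y\<in>Es j. \<delta> \<le> dist x y)"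
proof -
  have "\<exists>e>0. \<forall>x\<in>Es i. \<forall>y\<in>(\<Union>j\<in>{j. j < J \<and> j \<noteq> i}. Es j). e \<le> dist x y" if i: "i < J" for i
  proof (rule separate_compact_closed)
    show "closed (\<Union>j\<in>{j. j < J \<and> j \<noteq> i}. Es j)"
      by (intro closed_UN) (auto intro: compact_imp_closed cpt)
  qed (use dis i cpt in auto)
  then obtain e where e: "\<forall>i<J. e i > 0 \<and> (\<forall>x\<in>Es i. \<forall>y\<in>(\<Union>j\<in>{j. j < J \<and> j \<noteq> i}. Es j). e i \<le> dist x y)"
    by metis
  define \<delta> where "\<delta> = Min (insert 1 (e ` {..<J}))"
  have "\<delta> > 0" unfolding \<delta>_def using e by (subst Min_gr_iff) auto
  moreover have "\<delta> \<le> dist x y" if "i < J" "j < J" "i \<noteq> j" "x \<in> Es i" "y \<in> Es j" for i j x y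
  proof -
    have "\<delta> \<le> e i" unfolding \<delta>_def using that by (intro Min_le) auto
    also have "e i \<le> dist x y" using e that by blast
    finally show ?thesis .
  qed
  ultimately show ?thesis by blast
qed

lemma base_digits_inj:
  fixes M :: nat
  shows "\<forall>m<D. a m < M \<Longrightarrow> \<forall>m<D. b m < M \<Longrightarrow> (\<Sum>m<D. a m * M ^ m) = (\<Sum>m<D. b m * M ^ m) \<Longrightarrow>
    \<forall>m<D. a m = b m"
proof (induction D arbitrary: a b)
  case (Suc D)
  have shift: "(\<Sum>m<Suc D. f m * M ^ m) = f 0 + M * (\<Sum>m<D. f (Suc m) * M ^ m)" for f :: "nat \<Rightarrow> nat"
    unfolding sum.lessThan_Suc_shift sum_distrib_left by (simp add: mult_ac)
  have eq: "a 0 + M * (\<Sum>m<D. a (Suc m) * M ^ m) = b 0 + M * (\<Sum>m<D. b (Suc m) * M ^ m)"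
    using Suc.prems(3) by (simp only: shift)
  have lt: "a 0 < M" "b 0 < M" using Suc.prems(1,2) by auto
  then have "a 0 = b 0" using arg_cong[OF eq, of "\<lambda>n. n mod M"] by simp
  moreover have "(\<Sum>m<D. a (Suc m) * M ^ m) = (\<Sum>m<D. b (Suc m) * M ^ m)" using eq lt \<open>a 0 = b 0\<close> by simp
  then have "\<forall>m<D. a (Suc m) = b (Suc m)" using Suc.prems(1,2) by (intro Suc.IH) auto
  ultimately show ?case by (auto simp: less_Suc_eq_0_disj)
qed simp

lemma base_digits_less:
  fixes M :: nat
  shows "\<forall>m<D. a m < M \<Longrightarrow> (\<Sum>m<D. a m * M ^ m) < M ^ D"
proof (induction D)
  case (Suc D)
  have "(\<Sum>m<Suc D. a m * M ^ m) < M ^ D + a D * M ^ D" using Suc by simp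
  also have "\<dots> \<le> M ^ D + (M - 1) * M ^ D" using Suc.prems by (intro add_left_mono mult_right_mono) auto
  also have "\<dots> = M * M ^ D" using Suc.prems by (cases M) auto
  finally show ?case by simp
qed simp

text \<open>Cells are the sets of points whose coordinates
  have the same \<open>nearest_int\<close>.\<close>
definition grid_coord :: "nat \<Rightarrow> (nat \<Rightarrow> 'd) \<Rightarrow> real \<Rightarrow> real \<Rightarrow> nat \<Rightarrow> nat \<Rightarrow> real^'d::finite \<Rightarrow> real" where
  "grid_coord d \<xi> h c0 m k x = x $ \<xi> m / h + c0 + real k / (real d + 1)"

definition cell_code :: "nat \<Rightarrow> nat \<Rightarrow> (nat \<Rightarrow> real) \<Rightarrow> nat \<Rightarrow> nat" where
  "cell_code M d v k = (\<Sum>m<d. nat (nearest_int (v m)) * M ^ m) + k * M ^ d"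

lemma cell_code_digits:
  "cell_code M d v k = (\<Sum>m<Suc d. (if m < d then nat (nearest_int (v m)) else k) * M ^ m)"
  by (simp add: cell_code_def)

lemma cell_code_less:
  assumes "\<forall>m<d. 0 \<le> nearest_int (v m) \<and> nat (nearest_int (v m)) < M" "k < M"
  shows "cell_code M d v k < M ^ Suc d"
  unfolding cell_code_digits by (rule base_digits_less) (use assms in auto)

lemma cell_digits_bounded:
  assumes "\<forall>m<d. 2 \<le> v m \<and> v m \<le> B" "k \<le> d"
  shows "\<forall>m<d. 0 \<le> nearest_int (v m) \<and> nat (nearest_int (v m)) < nat \<lceil>B\<rceil> + d + 1"
    "k < nat \<lceil>B\<rceil> + d + 1"
proof -
  have "0 \<le> nearest_int (v m) \<and> nat (nearest_int (v m)) < nat \<lceil>B\<rceil> + d + 1" if "m < d" for m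
  proof -
    have v: "2 \<le> v m" "v m \<le> B" using assms(1) that by auto
    then have "0 \<le> nearest_int (v m)" by (simp add: nearest_int_def)
    moreover have "real_of_int (nearest_int (v m)) < real (nat \<lceil>B\<rceil> + d + 1)"
      using of_int_floor_le[of "v m + 1/2"] real_nat_ceiling_ge[of B] v
      unfolding nearest_int_def of_nat_add of_nat_1 by linarith
    ultimately show ?thesis by linarith
  qed
  then show "\<forall>m<d. 0 \<le> nearest_int (v m) \<and> nat (nearest_int (v m)) < nat \<lceil>B\<rceil> + d + 1" by blast
  show "k < nat \<lceil>B\<rceil> + d + 1" using assms(2) by simp
qed

lemma cell_code_inj:
  assumes "\<forall>m<d. 0 \<le> nearest_int (v m) \<and> nat (nearest_int (v m)) < M" "k < M"
    and "\<forall>m<d. 0 \<le> nearest_int (w m) \<and> nat (nearest_int (w m)) < M" "k' < M"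
    and "cell_code M d v k = cell_code M d w k'"
  shows "k = k'" "\<forall>m<d. nearest_int (v m) = nearest_int (w m)"
proof -
  have "\<forall>m<Suc d. (if m < d then nat (nearest_int (v m)) else k) = (if m < d then nat (nearest_int (w m)) else k')"
    by (rule base_digits_inj) (use assms in \<open>auto simp: cell_code_digits\<close>)
  then show "k = k'" "\<forall>m<d. nearest_int (v m) = nearest_int (w m)"
    using assms(1,3) by (metis lessI less_SucI less_irrefl eq_nat_nat_iff)+
qed

definition near_half :: "nat \<Rightarrow> real \<Rightarrow> bool" where
  "near_half d u \<longleftrightarrow> \<bar>u - of_int (nearest_int u)\<bar> > 1/2 - 1 / (2 * (real d + 1))"

lemma near_half_imp:
  assumes "near_half d u"
  shows "\<exists>z::int. \<bar>u - of_int z - 1/2\<bar> < 1 / (2 * (real d + 1))"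
proof -
  define e where "e = u - of_int (nearest_int u)"
  have e: "-1/2 \<le> e" "e < 1/2" using nearest_int_bounds[of u] by (auto simp: e_def)
  have "\<bar>e\<bar> > 1/2 - 1 / (2 * (real d + 1))" using assms by (simp add: near_half_def e_def)
  then have "\<bar>u - of_int (nearest_int u) - 1/2\<bar> < 1 / (2 * (real d + 1)) \<or>
      \<bar>u - of_int (nearest_int u - 1) - 1/2\<bar> < 1 / (2 * (real d + 1))"
    using e unfolding e_def by (auto simp: abs_if split: if_splits)
  then show ?thesis by blast
qed

lemma near_half_shift_unique:
  assumes "near_half d (v + real k / (real d + 1))" "near_half d (v + real k' / (real d + 1))"
    and "k \<le> d" "k' \<le> d"
  shows "k = k'"
proof (rule ccontr)
  assume ne: "k \<noteq> k'"
  define q where "q = 1 / (2 * (real d + 1))"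
  obtain z z' where z: "\<bar>v + real k / (real d + 1) - of_int z - 1/2\<bar> < q"
    and z': "\<bar>v + real k' / (real d + 1) - of_int z' - 1/2\<bar> < q"
    using near_half_imp[OF assms(1)] near_half_imp[OF assms(2)] unfolding q_def by blast
  have "(real k' - real k) / (real d + 1) - of_int (z' - z) =
      (v + real k' / (real d + 1) - of_int z' - 1/2) - (v + real k / (real d + 1) - of_int z - 1/2)"
    by (simp add: diff_divide_distrib)
  then have "\<bar>(real k' - real k) / (real d + 1) - of_int (z' - z)\<bar> * (real d + 1) < 2 * q * (real d + 1)"
    using z z' by (intro mult_strict_right_mono) linarith+
  moreover have "\<bar>(real k' - real k) / (real d + 1) - of_int (z' - z)\<bar> * (real d + 1)
      = \<bar>of_int (int k' - int k - (int d + 1) * (z' - z))\<bar>"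
    by (simp add: abs_mult[symmetric] field_simps)
  moreover have "2 * q * (real d + 1) = 1" by (simp add: q_def)
  ultimately have "int k' - int k = (int d + 1) * (z' - z)" by linarith
  moreover from this ne have "z' \<noteq> z" by auto
  then have "\<bar>(int d + 1) * (z' - z)\<bar> \<ge> int d + 1" by (simp add: abs_mult)
  ultimately show False using assms(3,4) by linarith
qed

text \<open>Pigeonhole: each of the \<open>d\<close> coordinates is near a half-integer for at most one of the
  \<open>d + 1\<close> shifts.\<close>
lemma exists_shift_not_near_half:
  fixes v :: "nat \<Rightarrow> real"
  shows "\<exists>k\<le>d. \<forall>m<d. \<not> near_half d (v m + real k / (real d + 1))"
proof (rule ccontr)
  assume "\<not> ?thesis"
  then obtain f where f: "\<forall>k\<in>{..d}. f k < d \<and> near_half d (v (f k) + real k / (real d + 1))"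
    by (metis atMost_iff)
  have "inj_on f {..d}"
    by (rule inj_onI) (use f near_half_shift_unique in \<open>metis atMost_iff\<close>)
  moreover have "f ` {..d} \<subseteq> {..<d}" using f by auto
  ultimately have "card {..d} \<le> card {..<d}" by (intro card_inj_on_le) auto
  then show False by simp
qed

section \<open>The network\<close>

locale step_net =
  fixes X :: "(real^'d::finite) set" and \<xi> :: "nat \<Rightarrow> 'd" and label :: "real^'d \<Rightarrow> nat"
    and d N M P :: nat and h c0 Bu \<gamma> t :: real
  assumes d: "d \<ge> 1" and N: "N \<ge> 36 * d * (2 * d + 1)"
    and u_bounds: "\<forall>x\<in>X. \<forall>m k. k \<le> d \<longrightarrow>
      2 \<le> grid_coord d \<xi> h c0 m k x \<and> grid_coord d \<xi> h c0 m k x \<le> Bu"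
    and Bu: "Bu > 0"
    and P: "P > 0" and label_le: "\<forall>x\<in>X. label x \<le> P"
    and \<gamma>: "\<gamma> > 1"
    and fit: "\<forall>x\<in>X. \<forall>k\<le>d.
      \<bar>real P * sigma1 (t / (real (cell_code M d (\<lambda>m. grid_coord d \<xi> h c0 m k x) k) + \<gamma>))
        - real (label x)\<bar> \<le> 1/4"
begin

abbreviation "u \<equiv> grid_coord d \<xi> h c0"

definition "Ms = real d + 1"
definition "safe_radius = 1/2 - 1 / (2 * (real d + 1))"
definition "\<tau> = 1 / (4 * (real d + 1))"

definition "wave m k x = centred_wave (u m k x)"
definition "dist2 m k x = twice_dist_int (u m k x)"
definition "excess m k x = dist_int_excess (u m k x)"
definition "clip m k x = round_clip Ms (u m k x)"

text \<open>\<open>\<omega> k\<close> weighs the \<open>k\<close>-th shifted grid: it vanishes unless all coordinates of \<open>x\<close> lie within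
  \<open>safe_radius + \<tau>\<close> of the centre of their cell.\<close>
definition "penalty m k x = max 0 (dist2 m k x / 2 - safe_radius)"
definition "Z k x = \<tau> - (\<Sum>m<d. penalty m k x)"
definition "\<omega> k x = max 0 (Z k x)"
definition "W x = (\<Sum>k\<le>d. \<omega> k x)"
definition "normaliser x = \<tau> / W x"

definition "net_code k x = (\<Sum>m<d. round_net Ms (u m k x) * real M ^ m) + real k * real M ^ d"
definition "G k x = sigma1 (t / (net_code k x + \<gamma>))"
definition "branch_label k x = real P * G k x - centred_wave (real P * G k x)"
definition "V x = (\<Sum>k\<le>d. \<omega> k x * branch_label k x)"

lemma u_bound: "x \<in> X \<Longrightarrow> k \<le> d \<Longrightarrow> \<bar>u m k x\<bar> \<le> Bu"
  using u_bounds by (fastforce simp: abs_le_iff)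

lemma \<tau>: "\<tau> > 0" "\<tau> \<le> 1/8" "(real d + 1) * \<tau> = 1/4"
  unfolding \<tau>_def using d by (auto simp: field_simps)

lemma safe_radius_bounds: "0 \<le> safe_radius" "safe_radius \<le> 1/2"
  by (auto simp: safe_radius_def field_simps)

lemma penalty_bounds: "0 \<le> penalty m k x" "penalty m k x \<le> 1/2"
  using twice_dist_int_bounds[of "u m k x"] safe_radius_bounds
  unfolding penalty_def dist2_def max_def by auto

lemma penalty_sum_bounds: "0 \<le> (\<Sum>m<d. penalty m k x)" "(\<Sum>m<d. penalty m k x) \<le> real d / 2"
  using sum_nonneg[of "{..<d}" "\<lambda>m. penalty m k x"] sum_mono[of "{..<d}" "\<lambda>m. penalty m k x" "\<lambda>_. 1/2"]
    penalty_bounds by auto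

lemma \<omega>_bounds: "0 \<le> \<omega> k x" "\<omega> k x \<le> \<tau>" "\<bar>\<omega> k x\<bar> \<le> 1"
  using penalty_sum_bounds[of k x] \<tau> by (auto simp: \<omega>_def Z_def max_def)

lemma Z_bound: "\<bar>Z k x\<bar> \<le> real d + 1"
  using penalty_sum_bounds[of k x] \<tau> unfolding Z_def abs_le_iff by auto

lemma W_ge: "x \<in> X \<Longrightarrow> W x \<ge> \<tau>"
proof -
  assume x: "x \<in> X"
  obtain k where k: "k \<le> d" "\<forall>m<d. \<not> near_half d (x $ \<xi> m / h + c0 + real k / (real d + 1))"
    using exists_shift_not_near_half[of d "\<lambda>m. x $ \<xi> m / h + c0"] by blast
  have "penalty m k x = 0" if "m < d" for m
  proof -
    have "\<not> near_half d (u m k x)" using k that by (simp add: grid_coord_def)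
    then show ?thesis by (simp add: penalty_def dist2_def twice_dist_int_eq near_half_def safe_radius_def)
  qed
  then have "\<omega> k x = \<tau>" using \<tau> by (simp add: \<omega>_def Z_def)
  moreover have "\<omega> k x \<le> W x"
    unfolding W_def using k \<omega>_bounds by (intro member_le_sum) auto
  ultimately show ?thesis by simp
qed

lemma W_le: "W x \<le> 1/4"
proof -
  have "W x \<le> (\<Sum>k\<le>d. \<tau>)" unfolding W_def using \<omega>_bounds by (intro sum_mono) auto
  also have "\<dots> = (real d + 1) * \<tau>" by simp
  finally show ?thesis using \<tau>(3) by simp
qed

lemma normaliser_bounds: "x \<in> X \<Longrightarrow> 0 < normaliser x \<and> normaliser x \<le> 1"
  using W_ge[of x] \<tau> by (auto simp: normaliser_def divide_le_eq_1)

lemma net_code_eq: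
  assumes x: "x \<in> X" and k: "k \<le> d" and pos: "\<omega> k x > 0"
  shows "net_code k x = real (cell_code M d (\<lambda>m. u m k x) k)"
proof -
  have "round_net Ms (u m k x) = real (nat (nearest_int (u m k x)))" if m: "m < d" for m
  proof -
    have "penalty m k x \<le> (\<Sum>m<d. penalty m k x)"
      using m penalty_bounds by (intro member_le_sum) auto
    also have "\<dots> < \<tau>" using pos by (simp add: \<omega>_def Z_def max_def split: if_splits)
    finally have "\<bar>u m k x - of_int (nearest_int (u m k x))\<bar> < safe_radius + \<tau>"
      by (simp add: penalty_def dist2_def twice_dist_int_eq)
    moreover have "safe_radius + \<tau> = 1/2 - 1 / (4 * Ms)"
      by (simp add: safe_radius_def \<tau>_def Ms_def divide_simps) algebra
    moreover have "2 \<le> u m k x" using u_bounds x k by blast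
    then have "nearest_int (u m k x) \<ge> 0" by (simp add: nearest_int_def)
    ultimately show ?thesis by (simp add: round_net_exact Ms_def)
  qed
  then show ?thesis by (simp add: net_code_def cell_code_def)
qed

lemma weighted_label: "x \<in> X \<Longrightarrow> k \<le> d \<Longrightarrow> \<omega> k x * branch_label k x = \<omega> k x * real (label x)"
proof (cases "\<omega> k x = 0")
  case False
  assume "x \<in> X" "k \<le> d"
  then have "\<bar>real P * G k x - of_int (int (label x))\<bar> \<le> 1/4"
    using fit net_code_eq \<omega>_bounds(1)[of k x] False by (simp add: G_def)
  then have "branch_label k x = real (label x)"
    unfolding branch_label_def by (subst round_by_centred_wave[of _ "int (label x)"]) simp_all
  then show ?thesis by simp
qed simp

lemma V_eq: "x \<in> X \<Longrightarrow> V x = real (label x) * W x"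
  by (simp add: V_def W_def weighted_label sum_distrib_left mult.commute)

lemma normaliser_V: "x \<in> X \<Longrightarrow> normaliser x * V x = \<tau> * real (label x)"
  using V_eq[of x] W_ge[of x] \<tau> by (simp add: normaliser_def)

lemma V_bound: "x \<in> X \<Longrightarrow> \<bar>V x\<bar> \<le> real P + 1"
proof -
  assume x: "x \<in> X"
  have "W x \<le> 1" using W_le[of x] by simp
  then have "real (label x) * W x \<le> real P * 1"
    using label_le x \<tau> W_ge[OF x] by (intro mult_mono) auto
  moreover have "0 \<le> real (label x) * W x" using W_ge[OF x] \<tau> by simp
  ultimately show ?thesis using V_eq[OF x] by simp
qed

lemma branch_label_bound: "\<bar>branch_label k x\<bar> \<le> real P + 1"
proof -
  have "0 \<le> G k x" "G k x \<le> 1" by (simp_all add: G_def sigma1_bounds)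
  then have "0 \<le> real P * G k x" "real P * G k x \<le> real P * 1"
    by (simp, intro mult_left_mono) auto
  then show ?thesis using centred_wave_bound[of "real P * G k x"] unfolding branch_label_def abs_le_iff by linarith
qed

lemma net_code_nonneg:
  assumes x: "x \<in> X" and k: "k \<le> d" shows "net_code k x \<ge> 0"
proof -
  have "round_net Ms (u m k x) \<ge> 0" for m
  proof -
    have "2 \<le> u m k x" using u_bounds x k by blast
    then show ?thesis using round_offset_bound[of Ms "u m k x"] unfolding round_net_def abs_le_iff by linarith
  qed
  then show ?thesis unfolding net_code_def by (intro add_nonneg_nonneg sum_nonneg) simp_all
qed

text \<open>A layer consists of units for each coordinate \<open>m < d\<close> and shift \<open>k \<le> d\<close>, units for each
  shift, and global units; at most five of each kind fit into width \<open>N\<close>.\<close>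
definition layer :: "(nat \<Rightarrow> nat \<Rightarrow> (real^'d \<Rightarrow> real) list) \<Rightarrow> (nat \<Rightarrow> (real^'d \<Rightarrow> real) list) \<Rightarrow>
    (real^'d \<Rightarrow> real) list \<Rightarrow> (real^'d \<Rightarrow> real) set" where
  "layer CU SU GU = (\<Union>m<d. \<Union>k\<le>d. set (CU m k)) \<union> (\<Union>k\<le>d. set (SU k)) \<union> set GU"

lemma layer_coordI: "m < d \<Longrightarrow> k \<le> d \<Longrightarrow> g \<in> set (CU m k) \<Longrightarrow> g \<in> layer CU SU GU"
  unfolding layer_def by blast

lemma layer_shiftI: "k \<le> d \<Longrightarrow> g \<in> set (SU k) \<Longrightarrow> g \<in> layer CU SU GU"
  unfolding layer_def by blast

lemma layer_globalI: "g \<in> set GU \<Longrightarrow> g \<in> layer CU SU GU"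
  unfolding layer_def by blast

lemma layer_card:
  assumes "\<forall>m k. length (CU m k) \<le> 5" "\<forall>k. length (SU k) \<le> 5" "length GU \<le> 5"
  shows "finite (layer CU SU GU)" "card (layer CU SU GU) \<le> N"
proof -
  show "finite (layer CU SU GU)" by (simp add: layer_def)
  have "card (\<Union>m<d. \<Union>k\<le>d. set (CU m k)) \<le> (\<Sum>m<d. \<Sum>k\<le>d. card (set (CU m k)))"
    by (rule order_trans[OF card_UN_le sum_mono[OF card_UN_le]]) auto
  also have "\<dots> \<le> (\<Sum>m<d. \<Sum>k\<le>d. 5)"
    using assms(1) by (intro sum_mono card_set_le_length) auto
  finally have "card (\<Union>m<d. \<Union>k\<le>d. set (CU m k)) \<le> 5 * d * (d + 1)" by (simp add: algebra_simps)
  moreover have "card (\<Union>k\<le>d. set (SU k)) \<le> (\<Sum>k\<le>d. 5)"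
    using assms(2) by (intro order_trans[OF card_UN_le] sum_mono card_set_le_length) auto
  moreover have "card (set GU) \<le> 5" using assms(3) by (rule card_set_le_length)
  moreover have "card (layer CU SU GU) \<le>
      card (\<Union>m<d. \<Union>k\<le>d. set (CU m k)) + card (\<Union>k\<le>d. set (SU k)) + card (set GU)"
    unfolding layer_def by (meson add_mono card_Un_le le_refl order_trans)
  ultimately have "card (layer CU SU GU) \<le> 5 * d * (d + 1) + 5 * (d + 1) + 5" by simp
  also have "\<dots> \<le> 36 * d * (2 * d + 1)" using d by (simp add: algebra_simps)
  finally show "card (layer CU SU GU) \<le> N" using N by simp
qed

lemma layer_neurons:
  assumes "\<And>m k g. m < d \<Longrightarrow> k \<le> d \<Longrightarrow> g \<in> set (CU m k) \<Longrightarrow> neuron X S g"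
    and "\<And>k g. k \<le> d \<Longrightarrow> g \<in> set (SU k) \<Longrightarrow> neuron X S g"
    and "\<And>g. g \<in> set GU \<Longrightarrow> neuron X S g"
  shows "\<forall>g\<in>layer CU SU GU. neuron X S g"
  using assms unfolding layer_def by blast

lemma layer_realizes_first:
  assumes lengths: "\<forall>m k. length (CU m k) \<le> 5" "\<forall>k. length (SU k) \<le> 5" "length GU \<le> 5"
    and "\<And>m k g. m < d \<Longrightarrow> k \<le> d \<Longrightarrow> g \<in> set (CU m k) \<Longrightarrow> neuron X (range (\<lambda>i x. x $ i)) g"
    and "\<And>k g. k \<le> d \<Longrightarrow> g \<in> set (SU k) \<Longrightarrow> neuron X (range (\<lambda>i x. x $ i)) g"
    and "\<And>g. g \<in> set GU \<Longrightarrow> neuron X (range (\<lambda>i x. x $ i)) g"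
  shows "layer_realizes N X 0 (layer CU SU GU)"
  using layer_card[OF lengths] layer_neurons[OF assms(4-6)] by (rule layer_realizes_0)

lemma layer_realizes_next:
  assumes "layer_realizes N X n S" "n' = Suc n"
    and lengths: "\<forall>m k. length (CU m k) \<le> 5" "\<forall>k. length (SU k) \<le> 5" "length GU \<le> 5"
    and "\<And>m k g. m < d \<Longrightarrow> k \<le> d \<Longrightarrow> g \<in> set (CU m k) \<Longrightarrow> neuron X S g"
    and "\<And>k g. k \<le> d \<Longrightarrow> g \<in> set (SU k) \<Longrightarrow> neuron X S g"
    and "\<And>g. g \<in> set GU \<Longrightarrow> neuron X S g"
  shows "layer_realizes N X n' (layer CU SU GU)"
  using layer_realizes_Suc[OF assms(1) layer_card[OF lengths] layer_neurons[OF assms(6-8)]] assms(2)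
  by simp

lemma dist2_bounds: "0 \<le> dist2 m k x" "dist2 m k x \<le> 1"
  using twice_dist_int_bounds by (auto simp: dist2_def)

lemma wave_bound: "\<bar>wave m k x\<bar> \<le> 1/4"
  unfolding wave_def by (rule centred_wave_bound)

lemma excess_bounds: "0 \<le> excess m k x" "excess m k x \<le> 1/4"
  using dist_int_excess_bounds by (auto simp: excess_def)

definition "Bc = real d + 3"

lemma clip_bound: "\<bar>clip m k x\<bar> \<le> Bc"
  using round_clip_bound[of Ms "u m k x"] by (simp add: clip_def Ms_def Bc_def)

lemma affine_comb_relay_u: "relay Bu (u m k) \<in> S \<Longrightarrow> k \<le> d \<Longrightarrow> affine_comb X S (u m k)"
  using Bu u_bound by (intro affine_comb_relay) auto

lemma affine_comb_relay_wave: "relay 1 (wave m k) \<in> S \<Longrightarrow> affine_comb X S (wave m k)"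
  by (rule affine_comb_relay[of 1]) (auto simp: order_trans[OF wave_bound])

lemma affine_comb_relay_dist2: "relay 1 (dist2 m k) \<in> S \<Longrightarrow> affine_comb X S (dist2 m k)"
  using dist2_bounds by (intro affine_comb_relay) auto

lemma affine_comb_relay_excess: "relay 1 (excess m k) \<in> S \<Longrightarrow> affine_comb X S (excess m k)"
  by (rule affine_comb_relay[of 1]) (auto simp: excess_bounds(1) order_trans[OF excess_bounds(2)])

lemma affine_comb_relay_clip: "relay Bc (clip m k) \<in> S \<Longrightarrow> affine_comb X S (clip m k)"
  using clip_bound by (intro affine_comb_relay) (auto simp: Bc_def)

lemma affine_comb_relay_\<omega>: "relay 1 (\<omega> k) \<in> S \<Longrightarrow> affine_comb X S (\<omega> k)"
  using \<omega>_bounds(3) by (intro affine_comb_relay) auto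

lemma affine_comb_relay_normaliser: "relay 1 normaliser \<in> S \<Longrightarrow> affine_comb X S normaliser"
  using normaliser_bounds abs_of_pos by (intro affine_comb_relay) fastforce+

lemma act_2u:
  assumes "x \<in> X" "k \<le> d" "0 \<le> c" shows "act (2 * u m k x + c) = sigma1 (2 * u m k x + c)"
proof -
  have "2 \<le> u m k x" using u_bounds assms by blast
  then show ?thesis using assms(3) by (simp add: act_nonneg)
qed

lemma affine_comb_u_coords: "affine_comb X (range (\<lambda>i x. x $ i)) (u m k)"
proof (rule affine_comb.cong)
  show "affine_comb X (range (\<lambda>i x. x $ i)) (\<lambda>x. (1 / h) * x $ \<xi> m + (c0 + real k / (real d + 1)))"
    by (intro affine_comb_affine affine_comb.basis) auto
qed (simp add: grid_coord_def)

definition "layer0 = layer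
  (\<lambda>m k. [\<lambda>x. act (2 * u m k x + 1/2), \<lambda>x. act (2 * u m k x), relay Bu (u m k)]) (\<lambda>k. []) []"

lemma realizes_layer0: "layer_realizes N X 0 layer0"
  unfolding layer0_def
proof (rule layer_realizes_first)
  fix m k g assume "g \<in> set [\<lambda>x. act (2 * u m k x + 1/2), \<lambda>x. act (2 * u m k x), relay Bu (u m k)]"
  moreover have "affine_comb X (range (\<lambda>i x. x $ i)) (\<lambda>x. 2 * u m k x + 1/2)"
    "affine_comb X (range (\<lambda>i x. x $ i)) (\<lambda>x. 2 * u m k x)"
    using affine_comb_u_coords by (rule affine_comb_affine, rule affine_comb.scale)
  ultimately show "neuron X (range (\<lambda>i x. x $ i)) g"
    using neuron_relay[OF affine_comb_u_coords] by (auto intro: neuron_act)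
qed auto

lemma comb0_u: "m < d \<Longrightarrow> k \<le> d \<Longrightarrow> affine_comb X layer0 (u m k)"
  by (rule affine_comb_relay_u) (auto simp: layer0_def intro: layer_coordI)

lemma comb0_wave:
  assumes "m < d" "k \<le> d" shows "affine_comb X layer0 (wave m k)"
proof (rule affine_comb.cong)
  show "affine_comb X layer0 (\<lambda>x. (1/2) * act (2 * u m k x + 1/2) + (- 1/4))"
    using assms by (intro affine_comb_affine affine_comb.basis) (auto simp: layer0_def intro: layer_coordI)
qed (use assms in \<open>simp add: wave_def centred_wave_def act_2u\<close>)

lemma comb0_dist2:
  assumes "m < d" "k \<le> d" shows "affine_comb X layer0 (dist2 m k)"
proof (rule affine_comb.cong)
  show "affine_comb X layer0 (\<lambda>x. act (2 * u m k x))"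
    using assms by (intro affine_comb.basis) (auto simp: layer0_def intro: layer_coordI)
qed (use assms act_2u[where c = 0] in \<open>simp add: dist2_def twice_dist_int_def\<close>)

definition "layer1 = layer
  (\<lambda>m k. [abs_unit 1 (\<lambda>x. dist2 m k x / 2 - 1/4), abs_unit 1 (\<lambda>x. dist2 m k x / 2 - safe_radius),
    relay 1 (wave m k), relay 1 (dist2 m k), relay Bu (u m k)]) (\<lambda>k. []) []"

lemma realizes_layer1: "layer_realizes N X 1 layer1"
  unfolding layer1_def
proof (rule layer_realizes_next[OF realizes_layer0])
  fix m k g assume mk: "m < d" "k \<le> d" and g: "g \<in> set [abs_unit 1 (\<lambda>x. dist2 m k x / 2 - 1/4),
    abs_unit 1 (\<lambda>x. dist2 m k x / 2 - safe_radius), relay 1 (wave m k), relay 1 (dist2 m k), relay Bu (u m k)]"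
  have "affine_comb X layer0 (\<lambda>x. (1/2) * dist2 m k x + e)" for e
    using comb0_dist2[OF mk] by (rule affine_comb_affine)
  then have "affine_comb X layer0 (\<lambda>x. dist2 m k x / 2 - e)" for e
    by (rule affine_comb.cong) auto
  then show "neuron X layer0 g"
    using g comb0_wave[OF mk] comb0_dist2[OF mk] comb0_u[OF mk] by (auto intro: neuron_abs_unit neuron_relay)
qed auto

lemma comb1_wave: "m < d \<Longrightarrow> k \<le> d \<Longrightarrow> affine_comb X layer1 (wave m k)"
  by (rule affine_comb_relay_wave) (auto simp: layer1_def intro: layer_coordI)

lemma comb1_dist2: "m < d \<Longrightarrow> k \<le> d \<Longrightarrow> affine_comb X layer1 (dist2 m k)"
  by (rule affine_comb_relay_dist2) (auto simp: layer1_def intro: layer_coordI)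

lemma comb1_u: "m < d \<Longrightarrow> k \<le> d \<Longrightarrow> affine_comb X layer1 (u m k)"
  by (rule affine_comb_relay_u) (auto simp: layer1_def intro: layer_coordI)

lemma comb1_max_0:
  assumes mk: "m < d" "k \<le> d" and e: "e = 1/4 \<or> e = safe_radius"
  shows "affine_comb X layer1 (\<lambda>x. max 0 (dist2 m k x / 2 - e))"
proof (rule affine_comb_max_0)
  show lin: "affine_comb X layer1 (\<lambda>x. dist2 m k x / 2 - e)"
    by (rule affine_comb.cong[OF affine_comb_affine[OF comb1_dist2[OF mk], of "1/2" "- e"]]) auto
  have "abs_unit 1 (\<lambda>x. dist2 m k x / 2 - e) \<in> layer1"
    unfolding layer1_def using mk by (rule layer_coordI) (use e in \<open>elim disjE; hypsubst; simp\<close>)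
  moreover have "\<bar>dist2 m k x / 2 - e\<bar> \<le> 1" for x
    using e dist2_bounds[of m k x] safe_radius_bounds by (auto simp: abs_le_iff)
  ultimately show "affine_comb X layer1 (\<lambda>x. \<bar>dist2 m k x / 2 - e\<bar>)"
    by (intro affine_comb_abs_unit) auto
qed

lemma comb1_excess: "m < d \<Longrightarrow> k \<le> d \<Longrightarrow> affine_comb X layer1 (excess m k)"
  by (rule affine_comb.cong[OF comb1_max_0[of m k "1/4"]])
    (auto simp: excess_def dist_int_excess_def dist2_def)

lemma comb1_Z: "k \<le> d \<Longrightarrow> affine_comb X layer1 (Z k)"
proof (rule affine_comb.cong)
  assume k: "k \<le> d"
  have "affine_comb X layer1 (penalty m k)" if "m < d" for m
    by (rule affine_comb.cong[OF comb1_max_0[of m k safe_radius]]) (use that k in \<open>auto simp: penalty_def\<close>)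
  then show "affine_comb X layer1 (\<lambda>x. (-1) * (\<Sum>m\<in>{..<d}. penalty m k x) + \<tau>)"
    by (intro affine_comb_affine affine_comb_sum) auto
qed (simp add: Z_def)

lemma excess_minus_wave_bound: "\<bar>excess m k x - Ms * wave m k x\<bar> \<le> Bc"
proof -
  have "\<bar>wave m k x\<bar> \<le> 1" using wave_bound[of m k x] by simp
  then have "Ms * \<bar>wave m k x\<bar> \<le> Ms * 1" by (intro mult_left_mono) (auto simp: Ms_def)
  then have "\<bar>Ms * wave m k x\<bar> \<le> Ms" by (simp add: abs_mult Ms_def)
  then show ?thesis using excess_bounds[of m k x] unfolding Bc_def Ms_def abs_le_iff by linarith
qed

definition "layer2 = layer
  (\<lambda>m k. [abs_unit Bc (\<lambda>x. excess m k x - Ms * wave m k x), relay 1 (excess m k),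
    relay 1 (wave m k), relay Bu (u m k)])
  (\<lambda>k. [abs_unit (real d + 1) (Z k), relay (real d + 1) (Z k)]) []"

lemma realizes_layer2: "layer_realizes N X 2 layer2"
  unfolding layer2_def
proof (rule layer_realizes_next[OF realizes_layer1])
  fix m k g assume mk: "m < d" "k \<le> d" and g: "g \<in> set [abs_unit Bc (\<lambda>x. excess m k x - Ms * wave m k x),
    relay 1 (excess m k), relay 1 (wave m k), relay Bu (u m k)]"
  have "affine_comb X layer1 (\<lambda>x. excess m k x - Ms * wave m k x)"
    using comb1_excess[OF mk] comb1_wave[OF mk] by (intro affine_comb_diff affine_comb.scale)
  then show "neuron X layer1 g"
    using g comb1_excess[OF mk] comb1_wave[OF mk] comb1_u[OF mk] by (auto intro: neuron_abs_unit neuron_relay)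
next
  fix k g assume "k \<le> d" "g \<in> set [abs_unit (real d + 1) (Z k), relay (real d + 1) (Z k)]"
  then show "neuron X layer1 g" using comb1_Z by (auto intro: neuron_abs_unit neuron_relay)
qed auto

lemma comb2_u: "m < d \<Longrightarrow> k \<le> d \<Longrightarrow> affine_comb X layer2 (u m k)"
  by (rule affine_comb_relay_u) (auto simp: layer2_def intro: layer_coordI)

lemma comb2_wave: "m < d \<Longrightarrow> k \<le> d \<Longrightarrow> affine_comb X layer2 (wave m k)"
  by (rule affine_comb_relay_wave) (auto simp: layer2_def intro: layer_coordI)

lemma comb2_excess: "m < d \<Longrightarrow> k \<le> d \<Longrightarrow> affine_comb X layer2 (excess m k)"
  by (rule affine_comb_relay_excess) (auto simp: layer2_def intro: layer_coordI)

lemma comb2_clip: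
  assumes mk: "m < d" "k \<le> d" shows "affine_comb X layer2 (clip m k)"
proof (rule affine_comb.cong)
  have "abs_unit Bc (\<lambda>x. excess m k x - Ms * wave m k x) \<in> layer2"
    using mk by (auto simp: layer2_def intro: layer_coordI)
  then have "affine_comb X layer2 (\<lambda>x. \<bar>excess m k x - Ms * wave m k x\<bar>)"
    using excess_minus_wave_bound by (intro affine_comb_abs_unit) (auto simp: Bc_def)
  then show "affine_comb X layer2 (\<lambda>x. min (excess m k x) (Ms * wave m k x))"
    using comb2_excess[OF mk] comb2_wave[OF mk] by (intro affine_comb_min affine_comb.scale)
qed (simp add: clip_def round_clip_def excess_def wave_def)

lemma comb2_\<omega>:
  assumes k: "k \<le> d" shows "affine_comb X layer2 (\<omega> k)"
proof (rule affine_comb.cong)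
  have "relay (real d + 1) (Z k) \<in> layer2" "abs_unit (real d + 1) (Z k) \<in> layer2"
    using k by (auto simp: layer2_def intro: layer_shiftI)
  then show "affine_comb X layer2 (\<lambda>x. max 0 (Z k x))"
    using Z_bound by (intro affine_comb_max_0 affine_comb_relay affine_comb_abs_unit) auto
qed (simp add: \<omega>_def)

lemma comb2_W: "affine_comb X layer2 W"
  unfolding W_def[abs_def] by (intro affine_comb_sum comb2_\<omega>) auto

definition "layer3 = layer
  (\<lambda>m k. [abs_unit Bc (\<lambda>x. clip m k x + excess m k x), relay Bc (clip m k), relay 1 (excess m k),
    relay 1 (wave m k), relay Bu (u m k)])
  (\<lambda>k. [relay 1 (\<omega> k)]) [recip_unit (\<lambda>x. W x / \<tau> - 1)]"

lemma realizes_layer3: "layer_realizes N X 3 layer3"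
  unfolding layer3_def
proof (rule layer_realizes_next[OF realizes_layer2])
  fix m k g assume mk: "m < d" "k \<le> d" and g: "g \<in> set [abs_unit Bc (\<lambda>x. clip m k x + excess m k x),
    relay Bc (clip m k), relay 1 (excess m k), relay 1 (wave m k), relay Bu (u m k)]"
  have "affine_comb X layer2 (\<lambda>x. clip m k x + excess m k x)"
    using comb2_clip[OF mk] comb2_excess[OF mk] by (rule affine_comb.add)
  then show "neuron X layer2 g"
    using g comb2_clip[OF mk] comb2_excess[OF mk] comb2_wave[OF mk] comb2_u[OF mk]
    by (auto intro: neuron_abs_unit neuron_relay)
next
  have "affine_comb X layer2 (\<lambda>x. (1 / \<tau>) * W x + (-1))" using comb2_W by (rule affine_comb_affine)
  then have "affine_comb X layer2 (\<lambda>x. W x / \<tau> - 1)" by (rule affine_comb.cong) auto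
  then show "neuron X layer2 g" if "g \<in> set [recip_unit (\<lambda>x. W x / \<tau> - 1)]" for g
    using that by (auto intro: neuron_recip_unit)
qed (use comb2_\<omega> in \<open>auto intro: neuron_relay\<close>)

lemma comb3_\<omega>: "k \<le> d \<Longrightarrow> affine_comb X layer3 (\<omega> k)"
  by (rule affine_comb_relay_\<omega>) (auto simp: layer3_def intro: layer_shiftI)

lemma comb3_round:
  assumes mk: "m < d" "k \<le> d" shows "affine_comb X layer3 (\<lambda>x. round_net Ms (u m k x))"
proof (rule affine_comb.cong)
  have relays: "affine_comb X layer3 (u m k)" "affine_comb X layer3 (wave m k)"
    "affine_comb X layer3 (excess m k)" "affine_comb X layer3 (clip m k)"
    using mk by (auto simp: layer3_def intro!: affine_comb_relay_u affine_comb_relay_wave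
        affine_comb_relay_excess affine_comb_relay_clip intro: layer_coordI)
  have "abs_unit Bc (\<lambda>x. clip m k x + excess m k x) \<in> layer3"
    using mk by (auto simp: layer3_def intro: layer_coordI)
  moreover have "\<bar>clip m k x + excess m k x\<bar> \<le> Bc" for x
    using clip_bound[of m k x] excess_bounds[of m k x] round_clip_bound[of Ms "u m k x"]
    by (simp add: clip_def Bc_def Ms_def abs_le_iff)
  ultimately have "affine_comb X layer3 (\<lambda>x. \<bar>clip m k x + excess m k x\<bar>)"
    by (intro affine_comb_abs_unit) (auto simp: Bc_def)
  with relays show "affine_comb X layer3 (\<lambda>x. u m k x + (-1) * wave m k x + excess m k x
      + (-1) * clip m k x + (-1) * \<bar>clip m k x + excess m k x\<bar>)"
    by (intro affine_comb.add affine_comb.scale)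
qed (auto simp: round_net_def round_offset_def wave_def excess_def clip_def max_def abs_if)

lemma comb3_net_code: "k \<le> d \<Longrightarrow> affine_comb X layer3 (net_code k)"
  unfolding net_code_def[abs_def]
  by (intro affine_comb.add affine_comb_sum affine_comb.const
      affine_comb.cong[OF affine_comb.scale[OF comb3_round]]) (auto simp: mult.commute)

lemma comb3_normaliser: "affine_comb X layer3 normaliser"
proof (rule affine_comb.cong)
  have "recip_unit (\<lambda>x. W x / \<tau> - 1) \<in> layer3" by (auto simp: layer3_def intro: layer_globalI)
  then show "affine_comb X layer3 (\<lambda>x. 1 / ((W x / \<tau> - 1) + 1))"
    using W_ge \<tau> by (intro affine_comb_recip_unit) auto
qed (simp add: normaliser_def)

definition "layer4 = layer (\<lambda>m k. [])
  (\<lambda>k. [recip_unit (\<lambda>x. net_code k x + \<gamma> - 1), relay 1 (\<omega> k)]) [relay 1 normaliser]"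

lemma realizes_layer4: "layer_realizes N X 4 layer4"
  unfolding layer4_def
proof (rule layer_realizes_next[OF realizes_layer3])
  fix k g assume k: "k \<le> d" and g: "g \<in> set [recip_unit (\<lambda>x. net_code k x + \<gamma> - 1), relay 1 (\<omega> k)]"
  have "affine_comb X layer3 (\<lambda>x. 1 * net_code k x + (\<gamma> - 1))"
    using comb3_net_code[OF k] by (rule affine_comb_affine)
  then have "affine_comb X layer3 (\<lambda>x. net_code k x + \<gamma> - 1)" by (rule affine_comb.cong) auto
  then show "neuron X layer3 g" using g comb3_\<omega>[OF k] by (auto intro: neuron_recip_unit neuron_relay)
qed (use comb3_normaliser in \<open>auto intro: neuron_relay\<close>)

lemma comb4_recip_code:
  assumes k: "k \<le> d" shows "affine_comb X layer4 (\<lambda>x. 1 / (net_code k x + \<gamma>))"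
proof (rule affine_comb.cong)
  have "recip_unit (\<lambda>x. net_code k x + \<gamma> - 1) \<in> layer4" using k by (auto simp: layer4_def intro: layer_shiftI)
  then show "affine_comb X layer4 (\<lambda>x. 1 / ((net_code k x + \<gamma> - 1) + 1))"
    using net_code_nonneg k \<gamma> by (intro affine_comb_recip_unit) force+
qed auto

lemma comb4_\<omega>: "k \<le> d \<Longrightarrow> affine_comb X layer4 (\<omega> k)"
  by (rule affine_comb_relay_\<omega>) (auto simp: layer4_def intro: layer_shiftI)

lemma comb4_normaliser: "affine_comb X layer4 normaliser"
  by (rule affine_comb_relay_normaliser) (auto simp: layer4_def intro: layer_globalI)

text \<open>The shift by \<open>2 * \<lceil>\<bar>t\<bar>\<rceil>\<close> keeps the input of the activation nonnegative, where it is the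
  periodic \<open>sigma1\<close>.\<close>
definition "layer5 = layer (\<lambda>m k. [])
  (\<lambda>k. [\<lambda>x. act (t * (1 / (net_code k x + \<gamma>)) + 2 * of_int \<lceil>\<bar>t\<bar>\<rceil>), relay 1 (\<omega> k)])
  [relay 1 normaliser]"

lemma realizes_layer5: "layer_realizes N X 5 layer5"
  unfolding layer5_def
proof (rule layer_realizes_next[OF realizes_layer4])
  fix k g assume k: "k \<le> d"
    and g: "g \<in> set [\<lambda>x. act (t * (1 / (net_code k x + \<gamma>)) + 2 * of_int \<lceil>\<bar>t\<bar>\<rceil>), relay 1 (\<omega> k)]"
  have "affine_comb X layer4 (\<lambda>x. t * (1 / (net_code k x + \<gamma>)) + 2 * of_int \<lceil>\<bar>t\<bar>\<rceil>)"
    using comb4_recip_code[OF k] by (rule affine_comb_affine)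
  then show "neuron X layer4 g" using g comb4_\<omega>[OF k] by (auto intro: neuron_act neuron_relay)
qed (use comb4_normaliser in \<open>auto intro: neuron_relay\<close>)

lemma G_bounds: "0 \<le> G k x" "G k x \<le> 1"
  by (simp_all add: G_def sigma1_bounds)

lemma comb5_G:
  assumes k: "k \<le> d" shows "affine_comb X layer5 (G k)"
proof (rule affine_comb.cong)
  show "affine_comb X layer5 (\<lambda>x. act (t * (1 / (net_code k x + \<gamma>)) + 2 * of_int \<lceil>\<bar>t\<bar>\<rceil>))"
    using k by (intro affine_comb.basis) (auto simp: layer5_def intro: layer_shiftI)
  show "\<forall>x\<in>X. act (t * (1 / (net_code k x + \<gamma>)) + 2 * of_int \<lceil>\<bar>t\<bar>\<rceil>) = G k x"
  proof
    fix x assume "x \<in> X"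
    then have c: "net_code k x + \<gamma> \<ge> 1" using net_code_nonneg[OF _ k] \<gamma> by force
    then have "\<bar>t / (net_code k x + \<gamma>)\<bar> \<le> \<bar>t\<bar> / 1"
      unfolding abs_divide by (intro divide_left_mono) auto
    then have "0 \<le> t / (net_code k x + \<gamma>) + 2 * of_int \<lceil>\<bar>t\<bar>\<rceil>" by linarith
    then show "act (t * (1 / (net_code k x + \<gamma>)) + 2 * of_int \<lceil>\<bar>t\<bar>\<rceil>) = G k x"
      by (simp add: act_periodic_int G_def)
  qed
qed

lemma comb5_\<omega>: "k \<le> d \<Longrightarrow> affine_comb X layer5 (\<omega> k)"
  by (rule affine_comb_relay_\<omega>) (auto simp: layer5_def intro: layer_shiftI)

lemma comb5_normaliser: "affine_comb X layer5 normaliser"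
  by (rule affine_comb_relay_normaliser) (auto simp: layer5_def intro: layer_globalI)

definition "layer6 = layer (\<lambda>m k. [])
  (\<lambda>k. [\<lambda>x. act (2 * (real P * G k x) + 1/2), relay 1 (G k), relay 1 (\<omega> k)]) [relay 1 normaliser]"

lemma realizes_layer6: "layer_realizes N X 6 layer6"
  unfolding layer6_def
proof (rule layer_realizes_next[OF realizes_layer5])
  fix k g assume k: "k \<le> d"
    and g: "g \<in> set [\<lambda>x. act (2 * (real P * G k x) + 1/2), relay 1 (G k), relay 1 (\<omega> k)]"
  have "affine_comb X layer5 (\<lambda>x. (2 * real P) * G k x + 1/2)"
    using comb5_G[OF k] by (rule affine_comb_affine)
  then have "affine_comb X layer5 (\<lambda>x. 2 * (real P * G k x) + 1/2)" by (rule affine_comb.cong) auto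
  then show "neuron X layer5 g" using g comb5_G[OF k] comb5_\<omega>[OF k] by (auto intro: neuron_act neuron_relay)
qed (use comb5_normaliser in \<open>auto intro: neuron_relay\<close>)

lemma comb6_branch_label:
  assumes k: "k \<le> d" shows "affine_comb X layer6 (branch_label k)"
proof (rule affine_comb.cong)
  have "affine_comb X layer6 (G k)"
    using k G_bounds by (intro affine_comb_relay[of 1]) (auto simp: layer6_def intro: layer_shiftI)
  moreover have "affine_comb X layer6 (\<lambda>x. act (2 * (real P * G k x) + 1/2))"
    using k by (intro affine_comb.basis) (auto simp: layer6_def intro: layer_shiftI)
  ultimately show "affine_comb X layer6
      (\<lambda>x. real P * G k x + (- 1/2) * act (2 * (real P * G k x) + 1/2) + 1/4)"
    by (intro affine_comb.add affine_comb.scale affine_comb.const)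
  show "\<forall>x\<in>X. real P * G k x + (- 1/2) * act (2 * (real P * G k x) + 1/2) + 1/4 = branch_label k x"
    using G_bounds by (simp add: act_nonneg branch_label_def centred_wave_def)
qed

lemma comb6_\<omega>: "k \<le> d \<Longrightarrow> affine_comb X layer6 (\<omega> k)"
  by (rule affine_comb_relay_\<omega>) (auto simp: layer6_def intro: layer_shiftI)

lemma comb6_normaliser: "affine_comb X layer6 normaliser"
  by (rule affine_comb_relay_normaliser) (auto simp: layer6_def intro: layer_globalI)

definition "Bl = real P + 1"

lemma Bl: "Bl \<ge> 1" by (simp add: Bl_def)

lemma \<omega>_branch_label_bounds: "\<forall>x\<in>X. \<bar>\<omega> k x\<bar> \<le> 1 \<and> \<bar>branch_label k x\<bar> \<le> Bl"
  using \<omega>_bounds(3) branch_label_bound by (simp add: Bl_def)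

lemma normaliser_V_bounds: "\<forall>x\<in>X. \<bar>normaliser x\<bar> \<le> 1 \<and> \<bar>V x\<bar> \<le> Bl"
  using normaliser_bounds V_bound abs_of_pos by (fastforce simp: Bl_def)

definition "layer7 = layer (\<lambda>m k. []) (\<lambda>k. product_units1 Bl (\<omega> k) (branch_label k)) [relay 1 normaliser]"

lemma realizes_layer7: "layer_realizes N X 7 layer7"
  unfolding layer7_def
proof (rule layer_realizes_next[OF realizes_layer6])
  fix k g assume "k \<le> d" "g \<in> set (product_units1 Bl (\<omega> k) (branch_label k))"
  then show "neuron X layer6 g" using comb6_\<omega> comb6_branch_label by (intro neuron_product_units1) auto
qed (use comb6_normaliser in \<open>auto intro: neuron_relay simp: product_units1_def\<close>)

lemma comb7_normaliser: "affine_comb X layer7 normaliser"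
  by (rule affine_comb_relay_normaliser) (auto simp: layer7_def intro: layer_globalI)

definition "layer8 = layer (\<lambda>m k. []) (\<lambda>k. product_units2 Bl (\<omega> k) (branch_label k)) [relay 1 normaliser]"

lemma realizes_layer8: "layer_realizes N X 8 layer8"
  unfolding layer8_def
proof (rule layer_realizes_next[OF realizes_layer7])
  fix k g assume "k \<le> d" "g \<in> set (product_units2 Bl (\<omega> k) (branch_label k))"
  moreover from \<open>k \<le> d\<close> have "set (product_units1 Bl (\<omega> k) (branch_label k)) \<subseteq> layer7"
    by (auto simp: layer7_def intro: layer_shiftI)
  ultimately show "neuron X layer7 g"
    using \<omega>_branch_label_bounds Bl by (intro neuron_product_units2) auto
qed (use comb7_normaliser in \<open>auto intro: neuron_relay simp: product_units2_def\<close>)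

lemma comb8_V: "affine_comb X layer8 V"
proof -
  have "affine_comb X layer8 (\<lambda>x. \<omega> k x * branch_label k x)" if "k \<le> d" for k
    using that \<omega>_branch_label_bounds Bl
    by (intro affine_comb_product[of Bl]) (auto simp: layer8_def intro: layer_shiftI)
  then show ?thesis unfolding V_def[abs_def] by (intro affine_comb_sum) auto
qed

lemma comb8_normaliser: "affine_comb X layer8 normaliser"
  by (rule affine_comb_relay_normaliser) (auto simp: layer8_def intro: layer_globalI)

definition "layer9 = layer (\<lambda>m k. []) (\<lambda>k. []) (product_units1 Bl normaliser V)"

lemma realizes_layer9: "layer_realizes N X 9 layer9"
  unfolding layer9_def
proof (rule layer_realizes_next[OF realizes_layer8])
  fix g assume "g \<in> set (product_units1 Bl normaliser V)"
  then show "neuron X layer8 g" using comb8_normaliser comb8_V by (rule neuron_product_units1[rotated 2])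
qed (auto simp: product_units1_def)

definition "layer10 = layer (\<lambda>m k. []) (\<lambda>k. []) (product_units2 Bl normaliser V)"

lemma realizes_layer10: "layer_realizes N X 10 layer10"
  unfolding layer10_def
proof (rule layer_realizes_next[OF realizes_layer9])
  fix g assume "g \<in> set (product_units2 Bl normaliser V)"
  moreover have "set (product_units1 Bl normaliser V) \<subseteq> layer9"
    by (auto simp: layer9_def intro: layer_globalI)
  ultimately show "neuron X layer9 g"
    using normaliser_V_bounds Bl by (intro neuron_product_units2) auto
qed (auto simp: product_units2_def)

lemma comb10_label: "affine_comb X layer10 (\<lambda>x. a * real (label x) + b)"
proof (rule affine_comb.cong)
  have "affine_comb X layer10 (\<lambda>x. normaliser x * V x)"
    using normaliser_V_bounds Bl
    by (intro affine_comb_product[of Bl]) (auto simp: layer10_def intro: layer_globalI)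
  then show "affine_comb X layer10 (\<lambda>x. (a / \<tau>) * (normaliser x * V x) + b)"
    by (rule affine_comb_affine)
qed (use normaliser_V \<tau> in simp)

theorem realizes_affine_label:
  assumes "L \<ge> 11"
  shows "restrict (\<lambda>x. a * real (label x) + b) X \<in> restr_set (H N L) X"
proof (cases "L = 11")
  case True
  then show ?thesis using realizes_layer10 comb10_label by (intro layer_realizes_output) auto
next
  case False
  define B where "B = \<bar>a\<bar> * real P + \<bar>b\<bar> + 1"
  have bound: "\<bar>a * real (label x) + b\<bar> \<le> B" if "x \<in> X" for x
  proof -
    have "\<bar>a * real (label x)\<bar> \<le> \<bar>a\<bar> * real P"
      using label_le that by (simp add: abs_mult mult_left_mono)
    then show ?thesis unfolding B_def by linarith
  qed
  moreover have "B > 0" unfolding B_def by (simp add: add_nonneg_pos)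
  moreover have "N \<ge> 1" using N d by (simp add: order_trans[OF _ N])
  ultimately have "layer_realizes N X (L - 1) {relay B (\<lambda>x. a * real (label x) + b)}"
    using assms False
    by (intro layer_realizes_relay_later[OF realizes_layer10 comb10_label, of B]) auto
  moreover have "affine_comb X {relay B (\<lambda>x. a * real (label x) + b)} (\<lambda>x. a * real (label x) + b)"
    using \<open>B > 0\<close> bound by (intro affine_comb_relay) auto
  ultimately show ?thesis by (rule layer_realizes_output)
qed

end

section \<open>Step functions on separated sets\<close>

lemma sum_indicator_disjoint:
  fixes f :: "nat \<Rightarrow> 'b::comm_semiring_1"
  assumes dis: "\<And>i j. i < J \<Longrightarrow> j < J \<Longrightarrow> i \<noteq> j \<Longrightarrow> Es i \<inter> Es j = {}"
    and "j < J" "x \<in> Es j"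
  shows "(\<Sum>i<J. f i * indicator (Es i) x) = f j"
proof -
  have "(\<Sum>i<J. f i * indicator (Es i) x) = (\<Sum>i<J. if i = j then f j else 0)"
    using assms by (intro sum.cong) (auto simp: indicator_def)
  then show ?thesis using \<open>j < J\<close> by simp
qed

lemma dist_lt_if_same_cells:
  fixes x y :: "real^'d::finite"
  assumes h: "h > 0" and \<xi>: "\<forall>i. \<exists>m<CARD('d). \<xi> m = i"
    and same: "\<forall>m<CARD('d). nearest_int (grid_coord d \<xi> h c0 m k x) = nearest_int (grid_coord d \<xi> h c0 m k y)"
  shows "dist x y < real CARD('d) * h"
proof -
  have "\<bar>x $ i - y $ i\<bar> < h" for i
  proof -
    obtain m where m: "m < CARD('d)" "\<xi> m = i" using \<xi> by blast
    then have "nearest_int (grid_coord d \<xi> h c0 m k x) = nearest_int (grid_coord d \<xi> h c0 m k y)"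
      using same by blast
    then have "\<bar>grid_coord d \<xi> h c0 m k x - grid_coord d \<xi> h c0 m k y\<bar> < 1"
      using nearest_int_bounds[of "grid_coord d \<xi> h c0 m k x"]
        nearest_int_bounds[of "grid_coord d \<xi> h c0 m k y"]
      unfolding abs_less_iff by linarith
    then have "\<bar>x $ i - y $ i\<bar> / h < 1"
      using h m(2) by (simp add: grid_coord_def diff_divide_distrib[symmetric] abs_divide)
    then show ?thesis using h by (simp add: divide_less_eq)
  qed
  then have "(\<Sum>i\<in>UNIV. \<bar>(x - y) $ i\<bar>) < (\<Sum>i\<in>(UNIV::'d set). h)"
    by (intro sum_strict_mono) simp_all
  then show ?thesis using norm_le_l1_cart[of "x - y"] by (simp add: dist_norm)
qed

lemma exists_grid_offset:
  fixes E :: "(real^'d::finite) set"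
  assumes "bounded E" "h > 0"
  obtains c0 :: real where "c0 \<ge> 2" "\<forall>x\<in>E. \<forall>i. \<bar>x $ i / h\<bar> \<le> c0 - 2"
proof -
  obtain R where R: "\<forall>x\<in>E. norm x \<le> R" using assms(1) unfolding bounded_iff by blast
  have "\<bar>x $ i / h\<bar> \<le> max 0 (R / h)" if "x \<in> E" for x i
  proof -
    have "\<bar>x $ i\<bar> / h \<le> R / h"
      using R that component_le_norm_cart[of x i] assms(2) by (intro divide_right_mono) force+
    then show ?thesis using assms(2) by (simp add: abs_divide)
  qed
  then show thesis by (intro that[of "max 0 (R / h) + 2"]) auto
qed

text \<open>Cells of diameter less than the distance between the sets meet at most one of them.\<close>
lemma exists_separating_grid:
  fixes Es :: "nat \<Rightarrow> (real^'d::finite) set"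
  assumes dis: "\<And>i j. i < J \<Longrightarrow> j < J \<Longrightarrow> i \<noteq> j \<Longrightarrow> Es i \<inter> Es j = {}"
    and cpt: "\<And>j. j < J \<Longrightarrow> compact (Es j)"
  obtains \<xi> :: "nat \<Rightarrow> 'd" and h c0 :: real
  where "\<And>x m k. x \<in> (\<Union>j<J. Es j) \<Longrightarrow> k \<le> CARD('d) \<Longrightarrow>
      2 \<le> grid_coord CARD('d) \<xi> h c0 m k x \<and> grid_coord CARD('d) \<xi> h c0 m k x \<le> 2 * c0"
    and "\<And>i j x y k. i < J \<Longrightarrow> j < J \<Longrightarrow> x \<in> Es i \<Longrightarrow> y \<in> Es j \<Longrightarrow>
      \<forall>m<CARD('d). nearest_int (grid_coord CARD('d) \<xi> h c0 m k x) =
        nearest_int (grid_coord CARD('d) \<xi> h c0 m k y) \<Longrightarrow> i = j"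
    and "c0 \<ge> 2"
proof -
  obtain \<xi> :: "nat \<Rightarrow> 'd" where "bij_betw \<xi> {0..<CARD('d)} UNIV"
    using ex_bij_betw_nat_finite[OF finite_class.finite_UNIV] by blast
  then have "\<xi> ` {0..<CARD('d)} = UNIV" by (rule bij_betw_imp_surj_on)
  then have \<xi>: "\<forall>i. \<exists>m<CARD('d). \<xi> m = i" by (metis atLeastLessThan_iff imageE UNIV_I zero_le)
  obtain \<delta> where \<delta>: "\<delta> > 0" "\<forall>i<J. \<forall>j<J. i \<noteq> j \<longrightarrow> (\<forall>x\<in>Es i. \<forall>y\<in>Es j. \<delta> \<le> dist x y)"
    using separated_compact_family[where Es = Es and J = J, OF dis cpt] by blast
  define h where "h = \<delta> / real CARD('d)"
  have h: "h > 0" "real CARD('d) * h = \<delta>" using \<delta> by (auto simp: h_def)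
  have "bounded (\<Union>j<J. Es j)" by (intro bounded_UN ballI compact_imp_bounded cpt) auto
  then obtain c0 where c0: "c0 \<ge> 2" "\<forall>x\<in>(\<Union>j<J. Es j). \<forall>i. \<bar>x $ i / h\<bar> \<le> c0 - 2"
    using h(1) by (rule exists_grid_offset)
  show thesis
  proof (rule that)
    show "c0 \<ge> 2" by (rule c0(1))
  next
    fix x m k assume x: "x \<in> (\<Union>j<J. Es j)" and k: "k \<le> CARD('d)"
    have "0 \<le> real k / (real CARD('d) + 1)" "real k / (real CARD('d) + 1) \<le> 1" using k by auto
    moreover have "\<bar>x $ \<xi> m / h\<bar> \<le> c0 - 2" using c0(2) x by blast
    ultimately show "2 \<le> grid_coord CARD('d) \<xi> h c0 m k x \<and> grid_coord CARD('d) \<xi> h c0 m k x \<le> 2 * c0"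
      unfolding grid_coord_def abs_le_iff by linarith
  next
    fix i j x y k assume ij: "i < J" "j < J" "x \<in> Es i" "y \<in> Es j"
      and same: "\<forall>m<CARD('d). nearest_int (grid_coord CARD('d) \<xi> h c0 m k x) =
        nearest_int (grid_coord CARD('d) \<xi> h c0 m k y)"
    have "dist x y < \<delta>" using dist_lt_if_same_cells[OF h(1) \<xi> same] h(2) by simp
    show "i = j"
    proof (rule ccontr)
      assume "i \<noteq> j"
      then have "\<delta> \<le> dist x y" using \<delta>(2) ij by blast
      then show False using \<open>dist x y < \<delta>\<close> by simp
    qed
  qed
qed

text \<open>Codes of cells are determined by their coordinates, so a labelling that is constant on cells
  factors through the codes, and one wave interpolates it.\<close>
lemma exists_wave_fitting_cells:
  fixes X :: "(real^'d::finite) set" and lbl :: "real^'d \<Rightarrow> nat"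
  assumes "P > 0" "\<forall>x\<in>X. lbl x \<le> P"
    and grid: "\<And>x m k. x \<in> X \<Longrightarrow> k \<le> d \<Longrightarrow>
      2 \<le> grid_coord d \<xi> h c0 m k x \<and> grid_coord d \<xi> h c0 m k x \<le> B"
    and cells: "\<And>x y k. x \<in> X \<Longrightarrow> y \<in> X \<Longrightarrow> k \<le> d \<Longrightarrow>
      \<forall>m<d. nearest_int (grid_coord d \<xi> h c0 m k x) = nearest_int (grid_coord d \<xi> h c0 m k y) \<Longrightarrow>
      lbl x = lbl y"
  obtains M :: nat and \<gamma> t :: real where "\<gamma> > 1" and "\<forall>x\<in>X. \<forall>k\<le>d.
    \<bar>real P * sigma1 (t / (real (cell_code M d (\<lambda>m. grid_coord d \<xi> h c0 m k x) k) + \<gamma>)) - real (lbl x)\<bar> \<le> 1/4"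
proof -
  define M where "M = nat \<lceil>B\<rceil> + d + 1"
  define code where "code kx = cell_code M d (\<lambda>m. grid_coord d \<xi> h c0 m (fst kx) (snd kx)) (fst kx)" for kx
  have digits: "\<forall>m<d. 0 \<le> nearest_int (grid_coord d \<xi> h c0 m k x) \<and>
      nat (nearest_int (grid_coord d \<xi> h c0 m k x)) < M" "k < M"
    if "x \<in> X" "k \<le> d" for k x
    using cell_digits_bounded[of d "\<lambda>m. grid_coord d \<xi> h c0 m k x" B k] grid[OF that] that(2)
    unfolding M_def by auto
  let ?A = "{(k, x). k \<le> d \<and> x \<in> X}"
  have "\<forall>a\<in>?A. code a < M ^ Suc d \<and> lbl (snd a) \<le> P"
  proof
    fix a assume "a \<in> ?A"
    then obtain k x where kx: "a = (k, x)" "x \<in> X" "k \<le> d" by blast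
    then show "code a < M ^ Suc d \<and> lbl (snd a) \<le> P"
      using cell_code_less[OF digits[OF kx(2,3)]] assms(2) by (simp add: code_def)
  qed
  moreover have "\<forall>a\<in>?A. \<forall>b\<in>?A. code a = code b \<longrightarrow> lbl (snd a) = lbl (snd b)"
  proof (intro ballI impI)
    fix a b assume ab: "a \<in> ?A" "b \<in> ?A" "code a = code b"
    then obtain k x k' y where kx: "a = (k, x)" "b = (k', y)" "x \<in> X" "k \<le> d" "y \<in> X" "k' \<le> d"
      by auto
    then have same: "\<forall>m<d. nearest_int (grid_coord d \<xi> h c0 m k x) = nearest_int (grid_coord d \<xi> h c0 m k' y)"
      and "k = k'"
      using cell_code_inj[OF digits[OF kx(3,4)] digits[OF kx(5,6)]] ab(3) by (simp_all add: code_def)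
    then have "lbl x = lbl y" using cells[OF kx(3,5,4)] by simp
    then show "lbl (snd a) = lbl (snd b)" using kx(1,2) by simp
  qed
  ultimately obtain \<gamma> t where "1 < \<gamma>"
    and fit: "\<forall>a\<in>?A. \<bar>real P * sigma1 (t / (real (code a) + \<gamma>)) - real (lbl (snd a))\<bar> \<le> 1/4"
    using wave_fits_labels[of P ?A code "M ^ Suc d" "\<lambda>a. lbl (snd a)"] \<open>P > 0\<close> by blast
  show thesis
  proof (rule that[of \<gamma>])
    show "\<gamma> > 1" by fact
    show "\<forall>x\<in>X. \<forall>k\<le>d. \<bar>real P * sigma1 (t / (real (cell_code M d (\<lambda>m. grid_coord d \<xi> h c0 m k x) k) + \<gamma>))
        - real (lbl x)\<bar> \<le> 1/4"
    proof (intro ballI allI impI)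
      fix x k assume "x \<in> X" "k \<le> d"
      then show "\<bar>real P * sigma1 (t / (real (cell_code M d (\<lambda>m. grid_coord d \<xi> h c0 m k x) k) + \<gamma>))
          - real (lbl x)\<bar> \<le> 1/4"
        using fit[rule_format, of "(k, x)"] by (simp add: code_def)
    qed
  qed
qed

theorem step_function_realizable:
  fixes Es :: "nat \<Rightarrow> (real^'d::finite) set" and lab :: "nat \<Rightarrow> nat"
  assumes dis: "\<And>i j. i < J \<Longrightarrow> j < J \<Longrightarrow> i \<noteq> j \<Longrightarrow> Es i \<inter> Es j = {}"
    and cpt: "\<And>j. j < J \<Longrightarrow> compact (Es j)"
    and N: "N \<ge> 36 * CARD('d) * (2 * CARD('d) + 1)" and L: "L \<ge> 11"
  defines "E \<equiv> \<Union>j<J. Es j"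
  shows "restrict (\<lambda>x. a * real (\<Sum>j<J. lab j * indicator (Es j) x) + b) E \<in> restr_set (H N L) E"
proof -
  define label where "label x = (\<Sum>j<J. lab j * indicator (Es j) x)" for x :: "real^'d"
  have label: "label x = lab j" if "j < J" "x \<in> Es j" for j x
    unfolding label_def using dis that by (rule sum_indicator_disjoint)
  obtain \<xi> h c0
    where grid: "\<And>x m k. x \<in> (\<Union>j<J. Es j) \<Longrightarrow> k \<le> CARD('d) \<Longrightarrow>
      2 \<le> grid_coord CARD('d) \<xi> h c0 m k x \<and> grid_coord CARD('d) \<xi> h c0 m k x \<le> 2 * c0"
    and cells: "\<And>i j x y k. i < J \<Longrightarrow> j < J \<Longrightarrow> x \<in> Es i \<Longrightarrow> y \<in> Es j \<Longrightarrow>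
      \<forall>m<CARD('d). nearest_int (grid_coord CARD('d) \<xi> h c0 m k x) =
        nearest_int (grid_coord CARD('d) \<xi> h c0 m k y) \<Longrightarrow> i = j"
    and c0: "c0 \<ge> 2"
    by (rule exists_separating_grid[where Es = Es and J = J, OF dis cpt]) (assumption | rule that)+
  define P where "P = Suc (\<Sum>j<J. lab j)"
  have "P > 0" by (simp add: P_def)
  have label_le: "\<forall>x\<in>E. label x \<le> P"
  proof
    fix x assume "x \<in> E"
    then obtain j where j: "j < J" "x \<in> Es j" unfolding E_def by blast
    have "lab j \<le> (\<Sum>j<J. lab j)" using j(1) by (intro member_le_sum) auto
    then show "label x \<le> P" using label[OF j] by (simp add: P_def)
  qed
  have cells_label: "label x = label y"
    if xy: "x \<in> E" "y \<in> E" and "k \<le> CARD('d)"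
      and same: "\<forall>m<CARD('d). nearest_int (grid_coord CARD('d) \<xi> h c0 m k x) =
        nearest_int (grid_coord CARD('d) \<xi> h c0 m k y)" for x y k
  proof -
    obtain i j where ij: "i < J" "x \<in> Es i" "j < J" "y \<in> Es j" using xy unfolding E_def by blast
    then have "i = j" using cells[OF _ _ _ _ same] by blast
    then show ?thesis using ij label by simp
  qed
  obtain M \<gamma> t where \<gamma>: "\<gamma> > 1" and fit: "\<forall>x\<in>E. \<forall>k\<le>CARD('d).
    \<bar>real P * sigma1 (t / (real (cell_code M CARD('d) (\<lambda>m. grid_coord CARD('d) \<xi> h c0 m k x) k) + \<gamma>))
      - real (label x)\<bar> \<le> 1/4"
    by (rule exists_wave_fitting_cells[OF \<open>P > 0\<close> label_le grid[folded E_def] cells_label])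
  interpret step_net E \<xi> label "CARD('d)" N M P h c0 "2 * c0" \<gamma> t
  proof
    show "1 \<le> CARD('d)" using finite_UNIV_card_ge_0[where 'a='d] by simp
    show "\<forall>x\<in>E. \<forall>m k. k \<le> CARD('d) \<longrightarrow>
        2 \<le> grid_coord CARD('d) \<xi> h c0 m k x \<and> grid_coord CARD('d) \<xi> h c0 m k x \<le> 2 * c0"
      using grid[folded E_def] by blast
    show "0 < 2 * c0" using c0 by simp
  qed (use N \<open>P > 0\<close> label_le \<gamma> fit in auto)
  show ?thesis using realizes_affine_label[OF L, of a b] unfolding label_def .
qed

lemma common_denominator:
  fixes r :: "nat \<Rightarrow> real"
  shows "\<forall>j<J. r j \<in> \<rat> \<Longrightarrow> \<exists>q::nat. q > 0 \<and> (\<forall>j<J. real q * r j \<in> \<int>)"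
proof (induction J)
  case 0
  then show ?case by (intro exI[of _ 1]) auto
next
  case (Suc J)
  then obtain q where q: "q > 0" "\<forall>j<J. real q * r j \<in> \<int>" by auto
  have "r J \<in> \<rat>" using Suc.prems by auto
  then obtain a b where ab: "b > 0" "r J = of_int a / of_int b" by (auto elim: Rats_cases')
  have "real (q * nat b) * r j \<in> \<int>" if "j < Suc J" for j
  proof (cases "j = J")
    case False
    then have "real q * r j \<in> \<int>" using q that by auto
    then have "of_int b * (real q * r j) \<in> \<int>" by (rule Ints_mult[OF Ints_of_int])
    then show ?thesis using ab(1) by (simp add: mult_ac)
  qed (use ab in simp)
  then show ?case using q ab by (intro exI[of _ "q * nat b"]) auto
qed

lemma rational_labels:
  fixes r :: "nat \<Rightarrow> real"
  assumes "\<forall>j<J. r j \<in> \<rat>"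
  obtains q c :: nat and lab :: "nat \<Rightarrow> nat"
  where "q > 0" "\<forall>j<J. r j = (real (lab j) - real c) / real q"
proof -
  obtain q :: nat where q: "q > 0" "\<forall>j<J. real q * r j \<in> \<int>"
    using common_denominator[OF assms] by blast
  define z where "z j = \<lfloor>real q * r j\<rfloor>" for j
  have z: "of_int (z j) = real q * r j" if "j < J" for j
    using q(2) that by (auto simp: z_def elim!: Ints_cases)
  define c where "c = (\<Sum>j<J. nat \<bar>z j\<bar>)"
  have "r j = (real (nat (z j + int c)) - real c) / real q" if "j < J" for j
  proof -
    have "nat \<bar>z j\<bar> \<le> c" unfolding c_def using that by (intro member_le_sum) auto
    then have "0 \<le> z j + int c" by linarith
    then have "real (nat (z j + int c)) = of_int (z j) + real c"
      by (metis of_int_of_nat_eq of_nat_nat of_int_add)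
    then show ?thesis using z[OF that] q(1) by (simp add: field_simps)
  qed
  with q(1) show thesis by (intro that) auto
qed

lemma rational_step_function_as_labels:
  fixes r :: "nat \<Rightarrow> real"
  assumes dis: "\<And>i j. i < J \<Longrightarrow> j < J \<Longrightarrow> i \<noteq> j \<Longrightarrow> Es i \<inter> Es j = {}"
    and r: "\<forall>j<J. r j \<in> \<rat>"
  obtains a :: real and lab :: "nat \<Rightarrow> nat" and b :: real where "\<And>x. x \<in> (\<Union>j<J. Es j) \<Longrightarrow>
    (\<Sum>j<J. r j * indicator (Es j) x) = a * real (\<Sum>j<J. lab j * indicator (Es j) x) + b"
proof -
  obtain q c lab where q: "q > 0" and lab: "\<forall>j<J. r j = (real (lab j) - real c) / real q"
    using r by (rule rational_labels)
  have "(\<Sum>j<J. r j * indicator (Es j) x) =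
      (1 / real q) * real (\<Sum>j<J. lab j * indicator (Es j) x) + (- real c / real q)"
    if "x \<in> (\<Union>j<J. Es j)" for x
  proof -
    from that obtain j where j: "j < J" "x \<in> Es j" by blast
    show ?thesis
      using sum_indicator_disjoint[where Es = Es, OF dis j, of lab]
        sum_indicator_disjoint[where Es = Es, OF dis j, of r] lab j(1)
      by (simp add: diff_divide_distrib)
  qed
  then show thesis by (rule that)
qed

theorem corollary5:
  fixes Es :: "nat \<Rightarrow> (real^'d) set" and J N L :: nat
  assumes "J \<ge> 1"
    and "\<And>i j. i < J \<Longrightarrow> j < J \<Longrightarrow> i \<noteq> j \<Longrightarrow> Es i \<inter> Es j = {}"
    and "\<And>j. j < J \<Longrightarrow> bounded (Es j) \<and> closed (Es j)"
    and "N \<ge> 36 * CARD('d) * (2 * CARD('d) + 1)"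
    and "L \<ge> 12"
  shows "restr_set (C Es J) (\<Union>j<J. Es j) \<subseteq> restr_set (H N L) (\<Union>j<J. Es j)"
proof
  fix F assume "F \<in> restr_set (C Es J) (\<Union>j<J. Es j)"
  then obtain r where r: "\<forall>j<J. r j \<in> \<rat>"
    and F: "F = restrict (\<lambda>x. \<Sum>j<J. r j * indicator (Es j) x) (\<Union>j<J. Es j)"
    unfolding restr_set_def C_def by blast
  obtain a lab b where step: "\<And>x. x \<in> (\<Union>j<J. Es j) \<Longrightarrow>
      (\<Sum>j<J. r j * indicator (Es j) x) = a * real (\<Sum>j<J. lab j * indicator (Es j) x) + b"
    by (rule rational_step_function_as_labels[where Es = Es and J = J, OF assms(2) r]) (assumption | rule that)+
  have cpt: "compact (Es j)" if "j < J" for j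
    using assms(3)[OF that] by (simp add: compact_eq_bounded_closed)
  have "restrict (\<lambda>x. a * real (\<Sum>j<J. lab j * indicator (Es j) x) + b) (\<Union>j<J. Es j)
      \<in> restr_set (H N L) (\<Union>j<J. Es j)"
    using assms(5) by (intro step_function_realizable[OF assms(2) cpt assms(4)]) simp_all
  moreover have "restrict (\<lambda>x. a * real (\<Sum>j<J. lab j * indicator (Es j) x) + b) (\<Union>j<J. Es j) = F"
    unfolding F using step by (intro restrict_ext) simp
  ultimately show "F \<in> restr_set (H N L) (\<Union>j<J. Es j)" by simp
qed

end
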